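(* Let $n,k\geq 1$ and let ${\bf m}=(m_1,\dots,m_k)$ be an array of nonnegative integers. For every permutation $\tau\in\mathfrak{S}_{k-1}$ there exists a bijection $\Psi_k:\mathcal{A}_n^k({\bf m})\to\mathcal{A}_n^k({\bf m}')$, where ${\bf m}'=(m_{\tau(1)},\dots,m_{\tau(k-1)},m_k)$, such that for every $\mathfrak{a}\in\mathcal{A}_n^k({\bf m})$, $$\bigl(\mathrm{des}(\mathfrak{a}),\mathrm{dez}(\mathfrak{a}),\mathrm{Der}(\mathfrak{a})\bigr)=\bigl(\mathrm{dez}(\Psi_k(\mathfrak{a})),\mathrm{des}(\Psi_k(\mathfrak{a})),\mathrm{Der}(\Psi_k(\mathfrak{a}))\bigr).$$
   Context: $[n]=\{1,\dots,n\}$ and $\mathfrak{S}_n$ is the set of permutations of $[n]$, written in one-line notation; $\mathrm{FIX}(\pi)=\{i:\pi(i)=i\}$. For an integer $k\ge 1$, a $k$-arrangement of $[n]$ is a pair $\mathfrak{a}=(\pi,\phi)$ with $\pi\in\mathfrak{S}_n$ and $\phi:\mathrm{FIX}(\pi)\to\{-1,\dots,-k\}$ an arbitrary function; $\mathcal{A}_n^k$ is the set of them. The positive reduction $\mathrm{red}^+(w)$ of an integer word $w$ replaces every occurrence of the $i$-th smallest positive letter of $w$ by $i$, for all $i$ (negative letters unchanged). The derangement form $\mathrm{df}_k(\mathfrak{a})$ is obtained from $\pi(1)\cdots\pi(n)$ by replacing $\pi(i)$ with $\phi(i)$ for each $i\in\mathrm{FIX}(\pi)$ and then applying positive reduction;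 the permutation form $\mathrm{pf}_k(\mathfrak{a})$ is obtained likewise, but replacing $\pi(i)$ by $\phi(i)$ only for those $i\in\mathrm{FIX}(\pi)$ with $\phi(i)\ne -k$. For an integer word $w=w_1\cdots w_n$, $\mathrm{des}(w)=|\{i\in[n-1]:w_i>w_{i+1}\}|$, and $\mathrm{Pos}(w)$ is the subword of positive letters. For $\mathfrak{a}\in\mathcal{A}_n^k$: $\mathrm{des}(\mathfrak{a})=\mathrm{des}(\mathrm{pf}_k(\mathfrak{a}))$, $\mathrm{dez}(\mathfrak{a})=\mathrm{des}(\mathrm{df}_k(\mathfrak{a}))$, $\mathrm{Der}(\mathfrak{a})=\mathrm{Pos}(\mathrm{df}_k(\mathfrak{a}))$, $\mathrm{fix}_i(\mathfrak{a})=|\{j\in\mathrm{FIX}(\pi):\phi(j)=-i\}|$. For ${\bf m}=(m_1,\dots,m_k)$, $\mathcal{A}_n^k({\bf m})=\{\mathfrak{a}\in\mathcal{A}_n^k:\mathrm{fix}_i(\mathfrak{a})=m_i,\ 1\le i\le k\}$. *)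

theory Defs
  imports "HOL-Combinatorics.Permutations"
begin

text \<open>A k-arrangement of [n] is a pair (pi, phi): pi a permutation of {1..n}
  (as a function nat => nat fixing everything outside {1..n}), phi a function on
  the fixed points of pi with values in {-1,...,-k}; phi is extended by 0 elsewhere
  so that each arrangement has a unique representation.\<close>

type_synonym arrangement = "(nat \<Rightarrow> nat) \<times> (nat \<Rightarrow> int)"

definition FIX :: "nat \<Rightarrow> (nat \<Rightarrow> nat) \<Rightarrow> nat set" where
  "FIX n \<pi> = {i \<in> {1..n}. \<pi> i = i}"

definition arrangements :: "nat \<Rightarrow> nat \<Rightarrow> arrangement set" where
  "arrangements n k = {(\<pi>, \<phi>). \<pi> permutes {1..n} \<and>
      (\<forall>i. if i \<in> FIX n \<pi> then \<phi> i \<in> {- int k .. -1} else \<phi> i = 0)}"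

definition red_pos :: "int list \<Rightarrow> int list" where
  "red_pos w = map (\<lambda>x. if 0 < x then int (card {y \<in> set w. 0 < y \<and> y \<le> x}) else x) w"

definition df :: "nat \<Rightarrow> nat \<Rightarrow> arrangement \<Rightarrow> int list" where
  "df n k a = red_pos (map (\<lambda>i. if i \<in> FIX n (fst a) then snd a i else int (fst a i)) [1..<n+1])"

definition pf :: "nat \<Rightarrow> nat \<Rightarrow> arrangement \<Rightarrow> int list" where
  "pf n k a = red_pos (map (\<lambda>i. if i \<in> FIX n (fst a) \<and> snd a i \<noteq> - int k
                                 then snd a i else int (fst a i)) [1..<n+1])"

definition des_word :: "int list \<Rightarrow> nat" where
  "des_word w = card {i. i + 1 < length w \<and> w ! i > w ! (i + 1)}"

definition Pos :: "int list \<Rightarrow> int list" where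
  "Pos w = filter (\<lambda>x. 0 < x) w"

definition des_arr :: "nat \<Rightarrow> nat \<Rightarrow> arrangement \<Rightarrow> nat" where
  "des_arr n k a = des_word (pf n k a)"

definition dez_arr :: "nat \<Rightarrow> nat \<Rightarrow> arrangement \<Rightarrow> nat" where
  "dez_arr n k a = des_word (df n k a)"

definition Der_arr :: "nat \<Rightarrow> nat \<Rightarrow> arrangement \<Rightarrow> int list" where
  "Der_arr n k a = Pos (df n k a)"

definition fix_i :: "nat \<Rightarrow> nat \<Rightarrow> arrangement \<Rightarrow> nat" where
  "fix_i n i a = card {j \<in> FIX n (fst a). snd a j = - int i}"

text \<open>m is the array (m_1,...,m_k) as a list of length k: m_i = m ! (i - 1).\<close>
definition arrangements_m :: "nat \<Rightarrow> nat \<Rightarrow> nat list \<Rightarrow> arrangement set" where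
  "arrangements_m n k m = {a \<in> arrangements n k. \<forall>i \<in> {1..k}. fix_i n i a = m ! (i - 1)}"

end

theory Submission
  imports Defs
begin

text \<open>An arrangement is encoded by its derangement form \<open>w\<close>: the fixed points become the negative
  letters recording their colours, and the positive letters form a standardized derangement.
  Then \<open>dez\<close> is the descent number of \<open>w\<close>, and \<open>des\<close> can be read off \<open>w\<close> as well, as the
  descent number for a modified comparison: a letter \<open>-k\<close> stands for a fixed point \<open>p\<close>, which
  exceeds a positive neighbour exactly when that neighbour is not an excedance.

  Deleting the letters \<open>-k\<close> from \<open>w\<close> leaves a word with slots between its letters. Filling a
  slot with letters \<open>-k\<close> changes both descent numbers by amounts depending only on the two
  neighbours of the slot, and the two amounts differ only where the excedance type of the neighbours
  falls or rises, with opposite effects. Falls and rises are equinumerous, so redistributing the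
  letters \<open>-k\<close> by an involution of the slots that exchanges falls with rises exchanges \<open>des\<close>
  and \<open>dez\<close>.

  The colours \<open>1, \<dots>, k - 1\<close> are permuted by adjacent transpositions: exchanging the colours
  \<open>c\<close> and \<open>c + 1\<close> and reversing every maximal run of such letters preserves both statistics.\<close>

fun rel_opt :: "('a \<Rightarrow> 'a \<Rightarrow> bool) \<Rightarrow> 'a option \<Rightarrow> 'a option \<Rightarrow> bool" where
  "rel_opt R (Some x) (Some y) = R x y"
| "rel_opt R _ _ = False"

fun count_adj_from :: "('a \<Rightarrow> 'a \<Rightarrow> bool) \<Rightarrow> 'a option \<Rightarrow> 'a list \<Rightarrow> nat" where
  "count_adj_from R p [] = 0"
| "count_adj_from R p (x # w) = (if rel_opt R p (Some x) then 1 else 0) + count_adj_from R (Some x) w"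

definition count_adj :: "('a \<Rightarrow> 'a \<Rightarrow> bool) \<Rightarrow> 'a list \<Rightarrow> nat" where
  "count_adj R w = count_adj_from R None w"

lemma count_adj_from_Cons:
  "count_adj_from R p (y # w) = (if rel_opt R p (Some y) then 1 else 0) + count_adj R (y # w)"
  by (simp add: count_adj_def)

lemma count_adj_card: "count_adj R w = card {i. Suc i < length w \<and> R (w ! i) (w ! Suc i)}"
proof (induction w rule: induct_list012)
  case (3 x y w)
  have "{i. Suc i < length (x # y # w) \<and> R ((x # y # w) ! i) ((x # y # w) ! Suc i)}
     = (if R x y then {0} else {}) \<union> Suc ` {i. Suc i < length (y # w) \<and> R ((y # w) ! i) ((y # w) ! Suc i)}"
    by (auto simp: image_def less_Suc_eq_0_disj)
  then show ?case using 3(2) by (simp add: card_image count_adj_def)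
qed (simp_all add: count_adj_def)

lemma des_word_eq_count_adj: "des_word w = count_adj (\<lambda>a b. a > b) w"
  by (simp add: des_word_def count_adj_card)

lemma count_adj_from_append:
  "count_adj_from R p (xs @ y # ys) = count_adj_from R p (xs @ [y]) + count_adj_from R (Some y) ys"
  by (induction xs arbitrary: p) auto

lemma count_adj_from_snoc:
  "count_adj_from R p (w @ [x]) =
     count_adj_from R p w + (if rel_opt R (if w = [] then p else Some (last w)) (Some x) then 1 else 0)"
  by (induction w arbitrary: p) auto

lemma count_adj_snoc:
  "w \<noteq> [] \<Longrightarrow> count_adj R (w @ [x]) = count_adj R w + (if R (last w) x then 1 else 0)"
  unfolding count_adj_def count_adj_from_snoc by simp

lemma count_adj_from_cong:
  assumes "\<And>a b. a \<in> set w \<union> set_option p \<Longrightarrow> b \<in> set w \<Longrightarrow> R a b = S a b"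
  shows "count_adj_from R p w = count_adj_from S p w"
  using assms
proof (induction w arbitrary: p)
  case (Cons x w)
  have "rel_opt R p (Some x) = rel_opt S p (Some x)"
    using Cons.prems by (cases p) auto
  moreover have "count_adj_from R (Some x) w = count_adj_from S (Some x) w"
    by (rule Cons.IH) (use Cons.prems in auto)
  ultimately show ?case by simp
qed simp

lemma count_adj_cong:
  "(\<And>a b. a \<in> set w \<Longrightarrow> b \<in> set w \<Longrightarrow> R a b = S a b) \<Longrightarrow> count_adj R w = count_adj S w"
  unfolding count_adj_def by (rule count_adj_from_cong) auto

lemma count_adj_from_map:
  "count_adj_from R (map_option f p) (map f w) = count_adj_from (\<lambda>a b. R (f a) (f b)) p w"
proof (induction w arbitrary: p)
  case (Cons x w)
  have "rel_opt R (map_option f p) (Some (f x)) = rel_opt (\<lambda>a b. R (f a) (f b)) p (Some x)"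
    by (cases p) auto
  then show ?case using Cons.IH[of "Some x"] by simp
qed simp

lemma count_adj_map: "count_adj R (map f w) = count_adj (\<lambda>a b. R (f a) (f b)) w"
  using count_adj_from_map[of R f None w] by (simp add: count_adj_def)

lemma count_adj_rev: "count_adj R (rev w) = count_adj (\<lambda>a b. R b a) w"
proof (induction w rule: induct_list012)
  case (3 x y w)
  have "count_adj R (rev (x # y # w)) = count_adj R (rev (y # w)) + (if R y x then 1 else 0)"
    using count_adj_snoc[of "rev (y # w)" R x] by simp
  then show ?case using 3(2) by (simp add: count_adj_def)
qed (simp_all add: count_adj_def)

section \<open>Filling the slots of a word with a letter\<close>

text \<open>A word \<open>u\<close> has \<open>length u + 1\<close> slots, slot \<open>s\<close> lying just before \<open>u ! s\<close>;
  \<open>fill_slots \<kappa> u g\<close> puts \<open>g ! s\<close> copies of \<open>\<kappa>\<close> into slot \<open>s\<close>.\<close>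

fun fill_slots :: "'a \<Rightarrow> 'a list \<Rightarrow> nat list \<Rightarrow> 'a list" where
  "fill_slots \<kappa> [] g = replicate (hd g) \<kappa>"
| "fill_slots \<kappa> (x # u) g = replicate (hd g) \<kappa> @ x # fill_slots \<kappa> u (tl g)"

fun slot_sizes :: "'a \<Rightarrow> 'a list \<Rightarrow> nat list" where
  "slot_sizes \<kappa> [] = [0]"
| "slot_sizes \<kappa> (x # l) =
     (if x = \<kappa> then (hd (slot_sizes \<kappa> l) + 1) # tl (slot_sizes \<kappa> l) else 0 # slot_sizes \<kappa> l)"

lemma slot_sizes_ne: "slot_sizes \<kappa> l \<noteq> []"
  by (induction l) auto

lemma length_slot_sizes: "length (slot_sizes \<kappa> l) = length (filter (\<lambda>x. x \<noteq> \<kappa>) l) + 1"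
  by (induction l) (auto simp: slot_sizes_ne)

lemma fill_slots_slot_sizes: "fill_slots \<kappa> (filter (\<lambda>x. x \<noteq> \<kappa>) l) (slot_sizes \<kappa> l) = l"
proof (induction l)
  case (Cons x l)
  obtain a r where "slot_sizes \<kappa> l = a # r"
    by (meson list.exhaust slot_sizes_ne)
  with Cons show ?case
    by (cases "filter (\<lambda>x. x \<noteq> \<kappa>) l") auto
qed simp

lemma filter_fill_slots: "\<kappa> \<notin> set u \<Longrightarrow> filter (\<lambda>x. x \<noteq> \<kappa>) (fill_slots \<kappa> u g) = u"
  by (induction u arbitrary: g) auto

lemma filter_fill_slots_other: "\<not> P \<kappa> \<Longrightarrow> filter P (fill_slots \<kappa> u g) = filter P u"
  by (induction u arbitrary: g) auto

lemma slot_sizes_replicate_append: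
  "slot_sizes \<kappa> (replicate a \<kappa> @ w) = (hd (slot_sizes \<kappa> w) + a) # tl (slot_sizes \<kappa> w)"
  by (induction a) (auto simp: slot_sizes_ne)

lemma slot_sizes_fill_slots:
  "\<kappa> \<notin> set u \<Longrightarrow> length g = length u + 1 \<Longrightarrow> slot_sizes \<kappa> (fill_slots \<kappa> u g) = g"
proof (induction u arbitrary: g)
  case Nil
  then obtain a where "g = [a]" by (cases g) auto
  then show ?case using slot_sizes_replicate_append[of \<kappa> a "[]"] by simp
next
  case (Cons x u)
  then obtain a r where "g = a # r" by (cases g) auto
  then show ?case using Cons slot_sizes_replicate_append[of \<kappa> a "x # fill_slots \<kappa> u r"] by auto
qed

lemma mset_fill_slots:
  "length g = length u + 1 \<Longrightarrow> mset (fill_slots \<kappa> u g) = mset u + replicate_mset (sum_list g) \<kappa>"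
proof (induction u arbitrary: g)
  case Nil then show ?case by (cases g) auto
next
  case (Cons x u) then show ?case by (cases g) (auto simp: multiset_eq_iff)
qed

text \<open>The change in the number of adjacent \<open>R\<close>-pairs caused by inserting \<open>\<kappa>\<close> (once or
  repeatedly, as \<open>\<kappa>\<close> is not \<open>R\<close>-related to itself) between the letters \<open>l\<close> and \<open>r\<close>.\<close>

definition insert_delta :: "('a \<Rightarrow> 'a \<Rightarrow> bool) \<Rightarrow> 'a \<Rightarrow> 'a option \<Rightarrow> 'a option \<Rightarrow> int" where
  "insert_delta R \<kappa> l r =
     of_bool (rel_opt R l (Some \<kappa>)) + of_bool (rel_opt R (Some \<kappa>) r) - of_bool (rel_opt R l r)"

definition slot_delta :: "('a \<Rightarrow> 'a \<Rightarrow> bool) \<Rightarrow> 'a \<Rightarrow> 'a option \<Rightarrow> 'a list \<Rightarrow> nat \<Rightarrow> int" where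
  "slot_delta R \<kappa> p u s = insert_delta R \<kappa> (if s = 0 then p else Some (u ! (s - 1)))
                                         (if s < length u then Some (u ! s) else None)"

lemma slot_delta_Suc: "slot_delta R \<kappa> p (x # u) (Suc s) = slot_delta R \<kappa> (Some x) u s"
  by (simp add: slot_delta_def)

lemma count_adj_from_replicate:
  assumes "\<not> R \<kappa> \<kappa>" "0 < a"
  shows "count_adj_from R p (replicate a \<kappa> @ w) =
           (if rel_opt R p (Some \<kappa>) then 1 else 0) + count_adj_from R (Some \<kappa>) w"
  using assms(2)
proof (induction a arbitrary: p)
  case (Suc a)
  then show ?case using assms(1) by (cases a) auto
qed simp

lemma count_adj_from_fill_slots:
  assumes "\<not> R \<kappa> \<kappa>" "length g = length u + 1"
  shows "int (count_adj_from R p (fill_slots \<kappa> u g)) =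
     int (count_adj_from R p u) + (\<Sum>s<length u + 1. if 0 < g ! s then slot_delta R \<kappa> p u s else 0)"
  using assms(2)
proof (induction u arbitrary: g p)
  case Nil
  then obtain a where "g = [a]" by (cases g) auto
  then show ?case
    using count_adj_from_replicate[where R=R and \<kappa>=\<kappa>, OF assms(1), of a p "[]"]
    by (cases "a = 0") (simp_all add: slot_delta_def insert_delta_def)
next
  case (Cons x u)
  then obtain a r where g: "g = a # r" and lr: "length r = length u + 1" by (cases g) auto
  have sum: "(\<Sum>s<length (x # u) + 1. if 0 < g ! s then slot_delta R \<kappa> p (x # u) s else 0)
      = (if 0 < a then slot_delta R \<kappa> p (x # u) 0 else 0) +
        (\<Sum>s<length u + 1. if 0 < r ! s then slot_delta R \<kappa> (Some x) u s else 0)"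
    unfolding g length_Cons Suc_eq_plus1[symmetric] sum.lessThan_Suc_shift
    by (simp only: slot_delta_Suc nth_Cons_Suc nth_Cons_0)
  have "count_adj_from R p (fill_slots \<kappa> (x # u) g) =
          (if 0 < a
           then (if rel_opt R p (Some \<kappa>) then 1 else 0) + count_adj_from R (Some \<kappa>) (x # fill_slots \<kappa> u r)
           else count_adj_from R p (x # fill_slots \<kappa> u r))"
    using g count_adj_from_replicate[where R=R and \<kappa>=\<kappa>, OF assms(1), of a p] by simp
  then show ?case
    using Cons.IH[OF lr, of "Some x"] sum by (simp add: slot_delta_def insert_delta_def)
qed

definition exchanging_involution :: "nat \<Rightarrow> (nat \<Rightarrow> 'b) \<Rightarrow> (nat \<Rightarrow> 'b) \<Rightarrow> (nat \<Rightarrow> nat) \<Rightarrow> bool" where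
  "exchanging_involution N f1 f2 \<sigma> \<longleftrightarrow> \<sigma> permutes {..<N} \<and> (\<forall>s. \<sigma> (\<sigma> s) = s) \<and>
     (\<forall>s<N. f1 (\<sigma> s) = f2 s \<and> f2 (\<sigma> s) = f1 s)"

lemma exchanging_involution_sym:
  "exchanging_involution N f1 f2 \<sigma> \<longleftrightarrow> exchanging_involution N f2 f1 \<sigma>"
  unfolding exchanging_involution_def by blast

lemma card_falls_rises:
  fixes q :: "nat \<Rightarrow> bool"
  shows "card {s. s < N \<and> q s \<and> \<not> q (Suc s)} + of_bool (q N)
       = card {s. s < N \<and> \<not> q s \<and> q (Suc s)} + of_bool (q 0)"
proof (induction N)
  case (Suc N)
  have "{s. s < Suc N \<and> q s \<and> \<not> q (Suc s)} =
          {s. s < N \<and> q s \<and> \<not> q (Suc s)} \<union> (if q N \<and> \<not> q (Suc N) then {N} else {})"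
    "{s. s < Suc N \<and> \<not> q s \<and> q (Suc s)} =
          {s. s < N \<and> \<not> q s \<and> q (Suc s)} \<union> (if \<not> q N \<and> q (Suc N) then {N} else {})"
    by (auto simp: less_Suc_eq)
  then show ?case using Suc by (cases "q N"; cases "q (Suc N)") auto
qed simp

lemma involution_exchanging_sets:
  assumes "finite X" "finite Y" "X \<inter> Y = {}" "card X = card Y"
  obtains \<sigma> where "\<And>s. \<sigma> (\<sigma> s) = s" "\<And>s. s \<in> X \<Longrightarrow> \<sigma> s \<in> Y" "\<And>s. s \<in> Y \<Longrightarrow> \<sigma> s \<in> X"
    "\<And>s. s \<notin> X \<Longrightarrow> s \<notin> Y \<Longrightarrow> \<sigma> s = s"
proof -
  obtain h where h: "bij_betw h X Y" using finite_same_card_bij assms by blast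
  define \<sigma> where "\<sigma> s = (if s \<in> X then h s else if s \<in> Y then inv_into X h s else s)" for s
  have XY: "s \<in> X \<Longrightarrow> \<sigma> s \<in> Y" for s
    using h by (auto simp: \<sigma>_def bij_betw_def)
  have YX: "s \<in> Y \<Longrightarrow> \<sigma> s \<in> X" for s
    using h assms(3) by (auto simp: \<sigma>_def bij_betw_def inv_into_into)
  have "\<sigma> (\<sigma> s) = s" for s
    using h assms(3) XY YX by (auto simp: \<sigma>_def bij_betw_def f_inv_into_f)
  moreover have "s \<notin> X \<Longrightarrow> s \<notin> Y \<Longrightarrow> \<sigma> s = s" for s
    by (simp add: \<sigma>_def)
  ultimately show thesis using that XY YX by blast
qed

lemma exists_exchanging_involution:
  assumes X: "X \<subseteq> {..<N}" and Y: "Y \<subseteq> {..<N}" and XY: "X \<inter> Y = {}" "card X = card Y"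
    and swap: "\<And>s t. s \<in> X \<Longrightarrow> t \<in> Y \<Longrightarrow> f1 s = f2 t \<and> f2 s = f1 t"
    and same: "\<And>s. s < N \<Longrightarrow> s \<notin> X \<Longrightarrow> s \<notin> Y \<Longrightarrow> f1 s = f2 s"
  shows "\<exists>\<sigma>. exchanging_involution N f1 f2 \<sigma>"
proof -
  have "finite X" "finite Y" using X Y finite_subset by auto
  then obtain \<sigma> where invol: "\<And>s. \<sigma> (\<sigma> s) = s" and "\<And>s. s \<in> X \<Longrightarrow> \<sigma> s \<in> Y"
    "\<And>s. s \<in> Y \<Longrightarrow> \<sigma> s \<in> X" and outside: "\<And>s. s \<notin> X \<Longrightarrow> s \<notin> Y \<Longrightarrow> \<sigma> s = s"
    using involution_exchanging_sets XY by metis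
  moreover have "\<sigma> permutes {..<N}"
    unfolding permutes_def using X Y outside by (metis invol in_mono)
  ultimately show ?thesis
    unfolding exchanging_involution_def using swap same by metis
qed

lemma count_adj_fill_slots_permute:
  assumes irrefl: "\<not> R \<kappa> \<kappa>" "\<not> S \<kappa> \<kappa>" and same: "count_adj R u = count_adj S u"
    and \<sigma>: "exchanging_involution (length u + 1) (slot_delta R \<kappa> None u) (slot_delta S \<kappa> None u) \<sigma>"
    and g: "length g = length u + 1"
  shows "count_adj R (fill_slots \<kappa> u (permute_list \<sigma> g)) = count_adj S (fill_slots \<kappa> u g)"
proof -
  let ?N = "length u + 1"
  have perm: "\<sigma> permutes {..<?N}" and invol: "\<And>s. \<sigma> (\<sigma> s) = s"
    and exch: "\<And>s. s < ?N \<Longrightarrow> slot_delta R \<kappa> None u (\<sigma> s) = slot_delta S \<kappa> None u s"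
    using \<sigma> unfolding exchanging_involution_def by auto
  have "(\<Sum>s<?N. if 0 < permute_list \<sigma> g ! s then slot_delta R \<kappa> None u s else 0)
      = (\<Sum>s<?N. if 0 < g ! \<sigma> s then slot_delta R \<kappa> None u s else 0)"
    using g perm by (intro sum.cong) (simp_all add: permute_list_nth)
  also have "\<dots> = (\<Sum>s<?N. if 0 < g ! \<sigma> (\<sigma> s) then slot_delta R \<kappa> None u (\<sigma> s) else 0)"
    using sum.permute[OF perm, of "\<lambda>s. if 0 < g ! \<sigma> s then slot_delta R \<kappa> None u s else 0"]
    by (simp add: comp_def)
  also have "\<dots> = (\<Sum>s<?N. if 0 < g ! s then slot_delta S \<kappa> None u s else 0)"
    using invol exch by (intro sum.cong) auto
  finally have sums: "(\<Sum>s<?N. if 0 < permute_list \<sigma> g ! s then slot_delta R \<kappa> None u s else 0)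
      = (\<Sum>s<?N. if 0 < g ! s then slot_delta S \<kappa> None u s else 0)" .
  have "int (count_adj R (fill_slots \<kappa> u (permute_list \<sigma> g))) = int (count_adj R u) +
      (\<Sum>s<?N. if 0 < permute_list \<sigma> g ! s then slot_delta R \<kappa> None u s else 0)"
    unfolding count_adj_def by (rule count_adj_from_fill_slots) (use irrefl g in auto)
  moreover have "int (count_adj S (fill_slots \<kappa> u g)) = int (count_adj S u) +
      (\<Sum>s<?N. if 0 < g ! s then slot_delta S \<kappa> None u s else 0)"
    unfolding count_adj_def by (rule count_adj_from_fill_slots) (use irrefl g in auto)
  ultimately show ?thesis using sums same by simp
qed

text \<open>A letter of a derangement form together with a flag; the flag of a positive letter records
  whether the corresponding position is an excedance, the flag of a negative letter is \<open>False\<close>.\<close>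

type_synonym aletter = "int \<times> bool"

definition df_gt :: "aletter \<Rightarrow> aletter \<Rightarrow> bool" where
  "df_gt a b \<longleftrightarrow> fst a > fst b"

text \<open>Comparison of adjacent letters of the permutation form, read off the derangement form.
  The letter \<open>-k\<close> stands for a fixed point \<open>p\<close> of value \<open>p\<close>: it exceeds every negative letter,
  and a neighbour at position \<open>p \<plusminus> 1\<close> with a value different from \<open>p\<close> exceeds \<open>p\<close>
  exactly when that neighbour is an excedance.\<close>

definition pf_gt :: "nat \<Rightarrow> aletter \<Rightarrow> aletter \<Rightarrow> bool" where
  "pf_gt k a b =
     (if fst a = - int k then (if fst b = - int k then False else if fst b > 0 then \<not> snd b else True)
      else if fst b = - int k then fst a > 0 \<and> snd a else fst a > fst b)"

definition is_exc :: "aletter \<Rightarrow> bool" where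
  "is_exc a \<longleftrightarrow> fst a > 0 \<and> snd a"

definition exc_consistent :: "aletter \<Rightarrow> aletter \<Rightarrow> bool" where
  "exc_consistent a b \<longleftrightarrow> (snd a \<and> \<not> snd b \<longrightarrow> fst a > fst b) \<and> (\<not> snd a \<and> snd b \<longrightarrow> fst a < fst b)"

abbreviation fix_letter :: "nat \<Rightarrow> aletter" where
  "fix_letter k \<equiv> (- int k, False)"

lemma df_gt_irrefl: "\<not> df_gt a a"
  by (simp add: df_gt_def)

lemma pf_gt_fix_letter: "\<not> pf_gt k (fix_letter k) (fix_letter k)"
  by (simp add: pf_gt_def)

lemma insert_delta_df_pf:
  fixes k :: nat
  assumes k: "k > 0"
    and l: "\<And>a. l = Some a \<Longrightarrow> fst a > - int k"
    and r: "\<And>b. r = Some b \<Longrightarrow> fst b > - int k"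
    and lr: "\<And>a b. l = Some a \<Longrightarrow> r = Some b \<Longrightarrow> fst a > 0 \<Longrightarrow> fst b > 0 \<Longrightarrow> exc_consistent a b"
  defines "D1 \<equiv> insert_delta df_gt (fix_letter k) l r"
    and "D2 \<equiv> insert_delta (pf_gt k) (fix_letter k) l r"
    and "el \<equiv> case_option True is_exc l"
    and "er \<equiv> case_option True is_exc r"
  shows "(el \<and> \<not> er \<longrightarrow> D1 = 0 \<and> D2 = 1) \<and> (\<not> el \<and> er \<longrightarrow> D1 = 1 \<and> D2 = 0) \<and> (el = er \<longrightarrow> D1 = D2)"
proof (cases l; cases r)
  fix a b assume la: "l = Some a" and rb: "r = Some b"
  obtain a1 a2 b1 b2 where ab: "a = (a1, a2)" "b = (b1, b2)" by force
  have "a1 > - int k" "b1 > - int k" using l[OF la] r[OF rb] ab by auto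
  moreover have "a1 > 0 \<Longrightarrow> b1 > 0 \<Longrightarrow> exc_consistent (a1, a2) (b1, b2)" using lr[OF la rb] ab by simp
  ultimately show ?thesis
    unfolding D1_def D2_def el_def er_def insert_delta_def la rb ab exc_consistent_def
    by (cases a2; cases b2; cases "a1 > 0"; cases "b1 > 0") (auto simp: df_gt_def pf_gt_def is_exc_def)
qed (use k l r in \<open>force simp: D1_def D2_def el_def er_def insert_delta_def df_gt_def pf_gt_def is_exc_def\<close>)+

lemma successively_filter_nth:
  assumes "successively R (filter P xs)" "Suc i < length xs" "P (xs ! i)" "P (xs ! Suc i)"
  shows "R (xs ! i) (xs ! Suc i)"
proof -
  have xs: "xs = take i xs @ [xs ! i, xs ! Suc i] @ drop (Suc (Suc i)) xs"
    using assms(2) by (simp add: Cons_nth_drop_Suc)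
  have "filter P xs = filter P (take i xs) @ [xs ! i, xs ! Suc i] @ filter P (drop (Suc (Suc i)) xs)"
    by (subst xs) (simp add: assms(3,4))
  then show ?thesis
    using assms(1) by (simp add: successively_append_iff)
qed

text \<open>The ends of the word count as excedances.\<close>

definition exc_before_slot :: "aletter list \<Rightarrow> nat \<Rightarrow> bool" where
  "exc_before_slot u s \<longleftrightarrow> (if 0 < s \<and> s \<le> length u then is_exc (u ! (s - 1)) else True)"

lemma slot_deltas_df_pf:
  fixes k :: nat and u :: "aletter list"
  assumes k: "k > 0" and letters: "\<forall>a\<in>set u. fst a > - int k"
    and consistent: "successively exc_consistent (filter (\<lambda>a. fst a > 0) u)"
    and s: "s < length u + 1"
  defines "D1 \<equiv> slot_delta df_gt (fix_letter k) None u s"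
    and "D2 \<equiv> slot_delta (pf_gt k) (fix_letter k) None u s"
    and "el \<equiv> exc_before_slot u s" and "er \<equiv> exc_before_slot u (Suc s)"
  shows "(el \<and> \<not> er \<longrightarrow> D1 = 0 \<and> D2 = 1) \<and> (\<not> el \<and> er \<longrightarrow> D1 = 1 \<and> D2 = 0) \<and> (el = er \<longrightarrow> D1 = D2)"
proof -
  define l where "l = (if s = 0 then None else Some (u ! (s - 1)))"
  define r where "r = (if s < length u then Some (u ! s) else None)"
  have el: "el = case_option True is_exc l" and er: "er = case_option True is_exc r"
    using s unfolding el_def er_def exc_before_slot_def l_def r_def by auto
  have D: "D1 = insert_delta df_gt (fix_letter k) l r" "D2 = insert_delta (pf_gt k) (fix_letter k) l r"
    unfolding D1_def D2_def slot_delta_def l_def r_def by simp_all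
  have lr: "exc_consistent a b" if "l = Some a" "r = Some b" "fst a > 0" "fst b > 0" for a b
    using that successively_filter_nth[OF consistent, of "s - 1"] unfolding l_def r_def
    by (auto split: if_splits)
  have bound: "i < length u \<Longrightarrow> fst (u ! i) > - int k" for i
    using letters by simp
  have "fst a > - int k" if "l = Some a" for a
    using that bound[of "s - 1"] s unfolding l_def by (auto split: if_splits)
  moreover have "fst b > - int k" if "r = Some b" for b
    using that bound[of s] unfolding r_def by (auto split: if_splits)
  ultimately show ?thesis
    unfolding el er D using insert_delta_df_pf[OF k _ _ lr] by blast
qed

text \<open>The slots where the excedance type falls and those where it rises are equinumerous,
  and an involution exchanging them exchanges the two slot deltas.\<close>

lemma exists_slot_involution:
  fixes k :: nat and u :: "aletter list"
  assumes k: "k > 0" and letters: "\<forall>a\<in>set u. fst a > - int k"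
    and consistent: "successively exc_consistent (filter (\<lambda>a. fst a > 0) u)"
  shows "\<exists>\<sigma>. exchanging_involution (length u + 1)
            (slot_delta df_gt (fix_letter k) None u) (slot_delta (pf_gt k) (fix_letter k) None u) \<sigma>"
proof -
  define N where "N = length u + 1"
  define q where "q = exc_before_slot u"
  define X where "X = {s. s < N \<and> q s \<and> \<not> q (Suc s)}"
  define Y where "Y = {s. s < N \<and> \<not> q s \<and> q (Suc s)}"
  note types = slot_deltas_df_pf[OF k letters consistent, folded N_def q_def]
  have "card X = card Y"
    using card_falls_rises[of N q] unfolding X_def Y_def
      by (simp add: q_def N_def exc_before_slot_def)
  moreover have "X \<subseteq> {..<N}" "Y \<subseteq> {..<N}" "X \<inter> Y = {}"
    unfolding X_def Y_def by auto
  moreover have "slot_delta df_gt (fix_letter k) None u s = slot_delta (pf_gt k) (fix_letter k) None u t \<and>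
      slot_delta (pf_gt k) (fix_letter k) None u s = slot_delta df_gt (fix_letter k) None u t"
    if "s \<in> X" "t \<in> Y" for s t
    using that types[of s] types[of t] unfolding X_def Y_def by auto
  moreover have "slot_delta df_gt (fix_letter k) None u s = slot_delta (pf_gt k) (fix_letter k) None u s"
    if "s < N" "s \<notin> X" "s \<notin> Y" for s
    using that types[of s] unfolding X_def Y_def by (cases "q s"; cases "q (Suc s)") simp_all
  ultimately show ?thesis
    unfolding N_def by (intro exists_exchanging_involution[of X _ Y]) (simp_all add: N_def)
qed

text \<open>\<open>rev_runs A f [] w\<close> reverses every maximal run of letters from \<open>A\<close> in \<open>w\<close> and applies
  \<open>f\<close> to its letters; the buffer holds the reversed part of the current run.\<close>

fun rev_runs :: "'a set \<Rightarrow> ('a \<Rightarrow> 'a) \<Rightarrow> 'a list \<Rightarrow> 'a list \<Rightarrow> 'a list" where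
  "rev_runs A f buf [] = map f buf"
| "rev_runs A f buf (x # w) =
     (if x \<in> A then rev_runs A f (x # buf) w else map f buf @ x # rev_runs A f [] w)"

lemma rev_runs_append_run: "set xs \<subseteq> A \<Longrightarrow> rev_runs A f buf (xs @ w) = rev_runs A f (rev xs @ buf) w"
  by (induction xs arbitrary: buf) auto

lemma rev_runs_involutive:
  assumes fA: "\<And>a. a \<in> A \<Longrightarrow> f a \<in> A" and ff: "\<And>a. a \<in> A \<Longrightarrow> f (f a) = a"
  shows "rev_runs A f [] (rev_runs A f [] w) = w"
proof (induction "length w" arbitrary: w rule: less_induct)
  case less
  define run where "run = takeWhile (\<lambda>x. x \<in> A) w"
  define rest where "rest = dropWhile (\<lambda>x. x \<in> A) w"
  have w: "w = run @ rest" unfolding run_def rest_def by simp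
  have runA: "set run \<subseteq> A" unfolding run_def by (auto dest: set_takeWhileD)
  then have frunA: "set (map f (rev run)) \<subseteq> A" using fA by auto
  have restore: "map f (rev (map f (rev run))) = run"
    using runA ff by (induction run) auto
  show ?case
  proof (cases rest)
    case Nil
    then show ?thesis
      using w restore rev_runs_append_run[OF runA, of f "[]" "[]"]
        rev_runs_append_run[OF frunA, of f "[]" "[]"]
      by simp
  next
    case (Cons x r)
    have "x \<notin> A" using Cons hd_dropWhile[of "\<lambda>x. x \<in> A" w] unfolding rest_def by auto
    moreover have "rev_runs A f [] (rev_runs A f [] r) = r"
      by (rule less) (simp add: w Cons)
    ultimately show ?thesis
      using w Cons restore rev_runs_append_run[OF runA, of f "[]" "x # r"]
        rev_runs_append_run[OF frunA, of f "[]"] by simp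
  qed
qed

lemma filter_rev_runs:
  assumes "\<And>a. a \<in> A \<Longrightarrow> \<not> P a" "\<And>a. a \<in> A \<Longrightarrow> f a \<in> A"
  shows "set buf \<subseteq> A \<Longrightarrow> filter P (rev_runs A f buf w) = filter P w"
proof (induction w arbitrary: buf)
  case Nil
  then show ?case using assms by (induction buf) auto
next
  case (Cons x w)
  have "filter P (map f buf) = []" using Cons.prems assms by (induction buf) auto
  then show ?case using Cons assms(1) by auto
qed

lemma mset_rev_runs:
  "set buf \<subseteq> A \<Longrightarrow> mset (rev_runs A f buf w) =
     image_mset f (mset buf) + image_mset (\<lambda>x. if x \<in> A then f x else x) (mset w)"
proof (induction w arbitrary: buf)
  case (Cons x w)
  then show ?case using Cons.IH[of "[]"] by (cases "x \<in> A") auto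
qed simp

lemma count_adj_from_map_run:
  assumes alike: "\<And>y a a'. y \<notin> A \<Longrightarrow> a \<in> A \<Longrightarrow> a' \<in> A \<Longrightarrow> R y a = R y a' \<and> R a y = R a' y"
    and reverses: "\<And>a b. a \<in> A \<Longrightarrow> b \<in> A \<Longrightarrow> R (f a) (f b) = R b a"
    and fA: "\<And>a. a \<in> A \<Longrightarrow> f a \<in> A"
    and p: "\<forall>y. p = Some y \<longrightarrow> y \<notin> A" and run: "set run \<subseteq> A"
    and ys: "ys = [] \<or> (\<exists>x. ys = [x] \<and> x \<notin> A)"
  shows "count_adj_from R p (map f run @ ys) = count_adj_from R p (rev run @ ys)"
proof (cases run)
  case (Cons b bs)
  obtain c cs where mc: "map f run = c # cs" using Cons by auto
  obtain d ds where rd: "rev run = d # ds" using Cons by (cases "rev run") auto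
  have "c \<in> set (map f run)" "d \<in> set (rev run)" using mc rd by simp_all
  then have cd: "c \<in> A" "d \<in> A" using run fA by auto
  have ne: "run \<noteq> []" using Cons by simp
  then have "last run \<in> A" "hd run \<in> A" using run by auto
  then have lasts: "last (map f run) \<in> A" "last (rev run) \<in> A"
    using fA ne by (simp_all add: last_map last_rev)
  have first: "rel_opt R p (Some c) = rel_opt R p (Some d)"
  proof (cases p)
    case (Some y)
    then show ?thesis using p alike[of y c d] cd by simp
  qed simp
  have "count_adj R (map f run) = count_adj (\<lambda>a b. R b a) run"
    unfolding count_adj_map by (rule count_adj_cong) (use run reverses in auto)
  then have body: "count_adj R (map f run) = count_adj R (rev run)"
    by (simp add: count_adj_rev)
  have "count_adj R (map f run @ ys) = count_adj R (rev run @ ys)"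
    using ys
  proof
    assume "\<exists>x. ys = [x] \<and> x \<notin> A"
    then obtain x where x: "ys = [x]" "x \<notin> A" by blast
    then have "R (last (map f run)) x = R (last (rev run)) x" using alike[of x] lasts by blast
    then show ?thesis using x body count_adj_snoc[of "map f run" R x] count_adj_snoc[of "rev run" R x] Cons
      by simp
  qed (simp add: body)
  then show ?thesis
    using first count_adj_from_Cons[of R p c "cs @ ys"] count_adj_from_Cons[of R p d "ds @ ys"]
    unfolding mc rd by simp
qed simp

lemma count_adj_from_rev_runs:
  assumes alike: "\<And>y a a'. y \<notin> A \<Longrightarrow> a \<in> A \<Longrightarrow> a' \<in> A \<Longrightarrow> R y a = R y a' \<and> R a y = R a' y"
    and reverses: "\<And>a b. a \<in> A \<Longrightarrow> b \<in> A \<Longrightarrow> R (f a) (f b) = R b a"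
    and fA: "\<And>a. a \<in> A \<Longrightarrow> f a \<in> A"
  shows "\<forall>y. p = Some y \<longrightarrow> y \<notin> A \<Longrightarrow> set buf \<subseteq> A \<Longrightarrow>
           count_adj_from R p (rev_runs A f buf w) = count_adj_from R p (rev buf @ w)"
proof (induction w arbitrary: p buf)
  case Nil
  then show ?case
    using count_adj_from_map_run[where R = R and A = A and f = f, OF alike reverses fA, of p buf "[]"]
    by simp
next
  case (Cons x w)
  show ?case
  proof (cases "x \<in> A")
    case True then show ?thesis using Cons by simp
  next
    case False
    have "count_adj_from R p (rev_runs A f buf (x # w)) =
            count_adj_from R p (map f buf @ [x]) + count_adj_from R (Some x) (rev_runs A f [] w)"
      using False count_adj_from_append[of R p "map f buf" x "rev_runs A f [] w"] by simp
    also have "count_adj_from R (Some x) (rev_runs A f [] w) = count_adj_from R (Some x) w"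
      using Cons.IH[of "Some x" "[]"] False by simp
    also have "count_adj_from R p (map f buf @ [x]) = count_adj_from R p (rev buf @ [x])"
      using count_adj_from_map_run[where R = R and A = A and f = f, OF alike reverses fA, of p buf "[x]"]
        Cons.prems False
      by simp
    finally show ?thesis using count_adj_from_append[of R p "rev buf" x w] by simp
  qed
qed

text \<open>\<open>annotate_from t w\<close> flags a positive letter \<open>x\<close> of \<open>w\<close> preceded by \<open>t'\<close> positive letters
  (counting from \<open>t\<close>) iff \<open>x > t' + 1\<close>, i.e. iff it is an excedance of the standardized derangement.\<close>

fun annotate_from :: "nat \<Rightarrow> int list \<Rightarrow> aletter list" where
  "annotate_from t [] = []"
| "annotate_from t (x # w) =
     (if x > 0 then (x, x > int t + 1) # annotate_from (t + 1) w else (x, False) # annotate_from t w)"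

definition annotate :: "int list \<Rightarrow> aletter list" where
  "annotate w = annotate_from 0 w"

lemma map_fst_annotate_from: "map fst (annotate_from t w) = w"
  by (induction w arbitrary: t) auto

lemma set_annotate_from: "a \<in> set (annotate_from t w) \<Longrightarrow> fst a \<in> set w"
  by (metis image_eqI list.set_map map_fst_annotate_from)

lemma length_annotate_from [simp]: "length (annotate_from t w) = length w"
  by (metis length_map map_fst_annotate_from)

lemma annotate_from_nonpos_append:
  "\<forall>x\<in>set l. x \<le> 0 \<Longrightarrow> annotate_from t (l @ r) = map (\<lambda>x. (x, False)) l @ annotate_from t r"
  by (induction l) auto

lemma annotate_from_replicate:
  "\<kappa> \<le> 0 \<Longrightarrow> annotate_from t (replicate a \<kappa> @ w) = replicate a (\<kappa>, False) @ annotate_from t w"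
  by (induction a) auto

lemma annotate_from_fill_slots:
  "\<kappa> \<le> 0 \<Longrightarrow> annotate_from t (fill_slots \<kappa> u g) = fill_slots (\<kappa>, False) (annotate_from t u) g"
  by (induction u arbitrary: t g)
    (auto simp: annotate_from_replicate annotate_from_replicate[where w = "[]", simplified])

lemma filter_annotate_from:
  "filter (\<lambda>a. fst a > 0) (annotate_from t w) = annotate_from t (filter (\<lambda>x. x > 0) w)"
  by (induction w arbitrary: t) auto

lemma annotate_from_nth:
  "i < length w \<Longrightarrow> annotate_from t w ! i =
     (w ! i, 0 < w ! i \<and> w ! i > int (t + length (filter (\<lambda>x. x > 0) (take i w))) + 1)"
proof (induction w arbitrary: t i)
  case (Cons x w)
  show ?case
  proof (cases i)
    case (Suc j)
    then have "j < length w" using Cons.prems by simp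
    then show ?thesis using Cons.IH[OF \<open>j < length w\<close>] \<open>i = Suc j\<close> by auto
  qed simp
qed simp

definition standard_derangement :: "int list \<Rightarrow> bool" where
  "standard_derangement D \<longleftrightarrow>
     distinct D \<and> set D = {1..int (length D)} \<and> (\<forall>j<length D. D ! j \<noteq> int j + 1)"

text \<open>In a standardized derangement an excedance followed by a non-excedance is a descent, and a
  non-excedance followed by an excedance is an ascent, because the value \<open>t + 2\<close> is excluded at
  position \<open>t + 2\<close>.\<close>

lemma successively_exc_consistent_annotate_from:
  "\<forall>x\<in>set D. x > 0 \<Longrightarrow> \<forall>j<length D. D ! j \<noteq> int t + int j + 1 \<Longrightarrow>
     successively exc_consistent (annotate_from t D)"
proof (induction D arbitrary: t)
  case (Cons x D)
  have "\<forall>j<length D. D ! j \<noteq> int (t + 1) + int j + 1"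
  proof (intro allI impI)
    fix j assume "j < length D"
    then show "D ! j \<noteq> int (t + 1) + int j + 1" using Cons.prems(2)[rule_format, of "Suc j"] by simp
  qed
  then have IH: "successively exc_consistent (annotate_from (t + 1) D)"
    using Cons.IH Cons.prems(1) by simp
  show ?case
  proof (cases D)
    case (Cons y E)
    have "y \<noteq> int t + 2" "x > 0" "y > 0"
      using Cons.prems(1) Cons.prems(2)[rule_format, of 1] \<open>D = y # E\<close> by auto
    then show ?thesis using IH Cons by (auto simp: exc_consistent_def)
  qed (use Cons.prems in \<open>auto simp: exc_consistent_def\<close>)
qed simp

definition df_words :: "nat \<Rightarrow> nat \<Rightarrow> nat list \<Rightarrow> int list set" where
  "df_words n k m = {w. length w = n \<and> (\<forall>x\<in>set w. x \<noteq> 0 \<and> - int k \<le> x) \<and>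
     standard_derangement (Pos w) \<and> (\<forall>i\<in>{1..k}. count (mset w) (- int i) = m ! (i - 1))}"

definition pf_des :: "nat \<Rightarrow> int list \<Rightarrow> nat" where
  "pf_des k w = count_adj (pf_gt k) (annotate w)"

lemma des_word_annotate: "des_word w = count_adj df_gt (annotate w)"
proof -
  have "count_adj (\<lambda>a b. a > b) (map fst (annotate w)) = count_adj df_gt (annotate w)"
    by (simp add: count_adj_map df_gt_def[abs_def])
  then show ?thesis
    by (simp add: des_word_eq_count_adj annotate_def map_fst_annotate_from)
qed

lemma df_words_letters:
  "w \<in> df_words n k m \<Longrightarrow> x \<in> set w \<Longrightarrow> x \<noteq> 0 \<and> - int k \<le> x"
  by (simp add: df_words_def)

lemma successively_exc_consistent_annotate:
  assumes "standard_derangement (Pos w)"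
  shows "successively exc_consistent (filter (\<lambda>a. fst a > 0) (annotate w))"
  unfolding annotate_def filter_annotate_from
  using successively_exc_consistent_annotate_from[of "Pos w" 0] assms
  by (simp add: standard_derangement_def Pos_def)

section \<open>Exchanging \<open>des\<close> and \<open>dez\<close>\<close>

definition slot_involution :: "nat \<Rightarrow> int list \<Rightarrow> nat \<Rightarrow> nat" where
  "slot_involution k u = (SOME \<sigma>. exchanging_involution (length u + 1)
     (slot_delta df_gt (fix_letter k) None (annotate u))
     (slot_delta (pf_gt k) (fix_letter k) None (annotate u)) \<sigma>)"

definition swap_des_dez :: "nat \<Rightarrow> int list \<Rightarrow> int list" where
  "swap_des_dez k w = (let u = filter (\<lambda>x. x \<noteq> - int k) w
              in fill_slots (- int k) u (permute_list (slot_involution k u) (slot_sizes (- int k) w)))"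

lemma exchanging_slot_involution:
  assumes k: "k > 0" and w: "w \<in> df_words n k m"
  defines "u \<equiv> filter (\<lambda>x. x \<noteq> - int k) w"
  shows "exchanging_involution (length u + 1) (slot_delta df_gt (fix_letter k) None (annotate u))
           (slot_delta (pf_gt k) (fix_letter k) None (annotate u)) (slot_involution k u)"
proof -
  have "\<forall>a\<in>set (annotate u). fst a > - int k"
    using df_words_letters[OF w] by (force simp: u_def annotate_def dest: set_annotate_from)
  moreover have "Pos u = Pos w"
    unfolding u_def Pos_def by (auto simp: filter_filter intro!: filter_cong)
  then have "successively exc_consistent (filter (\<lambda>a. fst a > 0) (annotate u))"
    using w successively_exc_consistent_annotate by (simp add: df_words_def)
  ultimately show ?thesis
    using exists_slot_involution[OF k] unfolding slot_involution_def length_annotate_from annotate_def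
    by (metis someI_ex length_annotate_from)
qed

lemma swap_des_dez_fill_slots:
  "- int k \<notin> set u \<Longrightarrow> length h = length u + 1 \<Longrightarrow>
     swap_des_dez k (fill_slots (- int k) u h) =
       fill_slots (- int k) u (permute_list (slot_involution k u) h)"
  by (simp add: swap_des_dez_def filter_fill_slots slot_sizes_fill_slots)

lemma swap_des_dez_decomposition:
  assumes k: "k > 0" and w: "w \<in> df_words n k m"
  obtains u g \<sigma> where "w = fill_slots (- int k) u g" "length g = length u + 1" "- int k \<notin> set u"
    "exchanging_involution (length u + 1) (slot_delta df_gt (fix_letter k) None (annotate u))
       (slot_delta (pf_gt k) (fix_letter k) None (annotate u)) \<sigma>"
    "\<And>h. length h = length u + 1 \<Longrightarrow>
       swap_des_dez k (fill_slots (- int k) u h) = fill_slots (- int k) u (permute_list \<sigma> h)"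
proof
  let ?u = "filter (\<lambda>x. x \<noteq> - int k) w"
  show "w = fill_slots (- int k) ?u (slot_sizes (- int k) w)"
    by (simp add: fill_slots_slot_sizes)
  show "length (slot_sizes (- int k) w) = length ?u + 1"
    by (simp add: length_slot_sizes)
  show "- int k \<notin> set ?u" by simp
  show "exchanging_involution (length ?u + 1) (slot_delta df_gt (fix_letter k) None (annotate ?u))
          (slot_delta (pf_gt k) (fix_letter k) None (annotate ?u)) (slot_involution k ?u)"
    using exchanging_slot_involution[OF k w] .
  show "swap_des_dez k (fill_slots (- int k) ?u h) =
      fill_slots (- int k) ?u (permute_list (slot_involution k ?u) h)"
    if "length h = length ?u + 1" for h
    using swap_des_dez_fill_slots that by simp
qed

lemma swap_des_dez_stats:
  assumes k: "k > 0" and w: "w \<in> df_words n k m"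
  shows "des_word (swap_des_dez k w) = pf_des k w" "pf_des k (swap_des_dez k w) = des_word w"
proof -
  obtain u g \<sigma> where w_eq: "w = fill_slots (- int k) u g" and lg: "length g = length u + 1"
    and ku: "- int k \<notin> set u"
    and \<sigma>: "exchanging_involution (length u + 1) (slot_delta df_gt (fix_letter k) None (annotate u))
       (slot_delta (pf_gt k) (fix_letter k) None (annotate u)) \<sigma>"
    and swap_fill: "\<And>h. length h = length u + 1 \<Longrightarrow>
       swap_des_dez k (fill_slots (- int k) u h) = fill_slots (- int k) u (permute_list \<sigma> h)"
    using swap_des_dez_decomposition[OF k w] by blast
  have \<sigma>': "exchanging_involution (length (annotate u) + 1)
       (slot_delta df_gt (fix_letter k) None (annotate u))
       (slot_delta (pf_gt k) (fix_letter k) None (annotate u)) \<sigma>"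
    using \<sigma> by (simp add: annotate_def)
  have lg': "length g = length (annotate u) + 1" using lg by (simp add: annotate_def)
  have ann: "annotate (fill_slots (- int k) u h) = fill_slots (fix_letter k) (annotate u) h" for h
    by (simp add: annotate_def annotate_from_fill_slots)
  have letters: "fst a \<noteq> - int k" if "a \<in> set (annotate u)" for a
    using that set_annotate_from ku by (fastforce simp: annotate_def)
  have same: "count_adj df_gt (annotate u) = count_adj (pf_gt k) (annotate u)"
    by (rule count_adj_cong) (simp add: df_gt_def pf_gt_def letters)
  have swap_eq: "swap_des_dez k w = fill_slots (- int k) u (permute_list \<sigma> g)"
    using swap_fill[OF lg] by (subst w_eq)
  show "des_word (swap_des_dez k w) = pf_des k w"
    unfolding des_word_annotate pf_des_def swap_eq ann
    by (subst w_eq, unfold ann)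
      (rule count_adj_fill_slots_permute[OF df_gt_irrefl pf_gt_fix_letter same \<sigma>' lg'])
  show "pf_des k (swap_des_dez k w) = des_word w"
    unfolding des_word_annotate pf_des_def swap_eq ann
    by (subst w_eq, unfold ann) (rule count_adj_fill_slots_permute[OF pf_gt_fix_letter df_gt_irrefl
          same[symmetric] \<sigma>'[unfolded exchanging_involution_sym[of _ "slot_delta df_gt _ _ _"]] lg'])
qed

lemma swap_des_dez_involutive_and_mset:
  assumes k: "k > 0" and w: "w \<in> df_words n k m"
  shows "swap_des_dez k (swap_des_dez k w) = w" "mset (swap_des_dez k w) = mset w"
proof -
  obtain u g \<sigma> where w_eq: "w = fill_slots (- int k) u g" and lg: "length g = length u + 1"
    and \<sigma>: "exchanging_involution (length u + 1) (slot_delta df_gt (fix_letter k) None (annotate u))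
       (slot_delta (pf_gt k) (fix_letter k) None (annotate u)) \<sigma>"
    and swap_fill: "\<And>h. length h = length u + 1 \<Longrightarrow>
       swap_des_dez k (fill_slots (- int k) u h) = fill_slots (- int k) u (permute_list \<sigma> h)"
    using swap_des_dez_decomposition[OF k w] by blast
  have perm: "\<sigma> permutes {..<length g}" and "\<sigma> \<circ> \<sigma> = id"
    using \<sigma> lg by (auto simp: exchanging_involution_def)
  then have twice: "permute_list \<sigma> (permute_list \<sigma> g) = g"
    by (metis permute_list_compose permute_list_id)
  have swap_eq: "swap_des_dez k w = fill_slots (- int k) u (permute_list \<sigma> g)"
    using swap_fill[OF lg] by (subst w_eq)
  then show "swap_des_dez k (swap_des_dez k w) = w"
    using swap_fill[of "permute_list \<sigma> g"] lg twice w_eq by simp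
  have "sum_list (permute_list \<sigma> g) = sum_list g"
    by (metis perm mset_permute_list sum_mset_sum_list)
  then show "mset (swap_des_dez k w) = mset w"
    unfolding swap_eq using mset_fill_slots[of "permute_list \<sigma> g" u] mset_fill_slots[OF lg] lg w_eq
      by simp
qed

lemma Pos_swap_des_dez: "Pos (swap_des_dez k w) = Pos w"
proof -
  have "Pos (swap_des_dez k w) = filter (\<lambda>x. x > 0) (filter (\<lambda>x. x \<noteq> - int k) w)"
    unfolding swap_des_dez_def Let_def Pos_def by (simp add: filter_fill_slots_other)
  also have "\<dots> = Pos w"
    unfolding Pos_def filter_filter by (rule filter_cong) auto
  finally show ?thesis .
qed

lemma swap_des_dez_in_df_words:
  assumes k: "k > 0" and w: "w \<in> df_words n k m"
  shows "swap_des_dez k w \<in> df_words n k m"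
proof -
  have "mset (swap_des_dez k w) = mset w" by (rule swap_des_dez_involutive_and_mset(2)[OF k w])
  then have "length (swap_des_dez k w) = length w" "set (swap_des_dez k w) = set w"
    by (metis size_mset, metis set_mset_mset)
  then show ?thesis
    using w \<open>mset (swap_des_dez k w) = mset w\<close> Pos_swap_des_dez[of k w] by (simp add: df_words_def)
qed

lemma bij_swap_des_dez: "k > 0 \<Longrightarrow> bij_betw (swap_des_dez k) (df_words n k m) (df_words n k m)"
  by (rule bij_betwI[where g = "swap_des_dez k"])
    (simp_all add: swap_des_dez_in_df_words swap_des_dez_involutive_and_mset)

section \<open>Permuting the colours\<close>

text \<open>Swapping the colours \<open>c\<close> and \<open>c + 1\<close> inside every maximal run of letters \<open>-c, -c - 1\<close>
  and reversing the run keeps both descent statistics: all other letters compare alike with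
  \<open>-c\<close> and \<open>-c - 1\<close>, and inside the run every descent becomes an ascent and vice versa.\<close>

definition colour_swap :: "nat \<Rightarrow> int list \<Rightarrow> int list" where
  "colour_swap c = rev_runs {- int c, - int c - 1} (transpose (- int c) (- int c - 1)) []"

lemma annotate_from_rev_runs:
  assumes nonpos: "\<forall>x\<in>A. x \<le> 0" and fA: "\<And>x. x \<in> A \<Longrightarrow> f x \<in> A"
  shows "set buf \<subseteq> A \<Longrightarrow> annotate_from t (rev_runs A f buf w) =
           rev_runs (fst -` A) (apfst f) (map (\<lambda>x. (x, False)) buf) (annotate_from t w)"
proof (induction w arbitrary: t buf)
  case Nil
  then have "\<forall>x\<in>set (map f buf). x \<le> 0" using nonpos fA by auto
  then show ?case using annotate_from_nonpos_append[of "map f buf" t "[]"] by simp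
next
  case (Cons x w)
  show ?case
  proof (cases "x \<in> A")
    case True
    then show ?thesis using Cons nonpos by auto
  next
    case False
    have "\<forall>y\<in>set (map f buf). y \<le> 0" using Cons.prems nonpos fA by auto
    then have "annotate_from t (rev_runs A f buf (x # w)) =
       map (\<lambda>y. (y, False)) (map f buf) @ annotate_from t (x # rev_runs A f [] w)"
      using False annotate_from_nonpos_append by simp
    then show ?thesis
      using False Cons.IH[of "[]"] by auto
  qed
qed

lemma colour_swap_involutive: "colour_swap c (colour_swap c w) = w"
  unfolding colour_swap_def by (rule rev_runs_involutive) auto

lemma colour_swap_stats:
  assumes c: "1 \<le> c" "c + 1 < k"
  shows "des_word (colour_swap c w) = des_word w" "pf_des k (colour_swap c w) = pf_des k w"
proof -
  let ?A = "fst -` {- int c, - int c - 1} :: aletter set"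
  let ?f = "apfst (transpose (- int c) (- int c - 1)) :: aletter \<Rightarrow> aletter"
  have ann: "annotate (colour_swap c w) = rev_runs ?A ?f [] (annotate w)"
    unfolding annotate_def colour_swap_def using c by (subst annotate_from_rev_runs) auto
  have fA: "\<And>a. a \<in> ?A \<Longrightarrow> ?f a \<in> ?A"
    by (auto simp: apfst_def map_prod_def split: prod.splits)
  have kc: "- int k \<noteq> - int c" "- int k \<noteq> - int c - 1" using c by auto
  have df_alike: "df_gt y a = df_gt y a' \<and> df_gt a y = df_gt a' y"
    if "y \<notin> ?A" "a \<in> ?A" "a' \<in> ?A" for y a a'
    using that by (auto simp: df_gt_def)
  have df_rev: "df_gt (?f a) (?f b) = df_gt b a" if "a \<in> ?A" "b \<in> ?A" for a b
    using that by (auto simp: df_gt_def)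
  have pf_A: "pf_gt k y a = (fst y = - int k \<or> fst y > fst a) \<and>
      pf_gt k a y = (fst y \<noteq> - int k \<and> fst a > fst y)"
    if "a \<in> ?A" for y a
    using that kc c by (auto simp: pf_gt_def)
  have pf_alike: "pf_gt k y a = pf_gt k y a' \<and> pf_gt k a y = pf_gt k a' y"
    if "y \<notin> ?A" "a \<in> ?A" "a' \<in> ?A" for y a a'
    using that pf_A[OF that(2)] pf_A[OF that(3)] by auto
  have pf_rev: "pf_gt k (?f a) (?f b) = pf_gt k b a" if "a \<in> ?A" "b \<in> ?A" for a b
  proof -
    have pf_df: "pf_gt k a b = df_gt a b" if "a \<in> ?A" "b \<in> ?A" for a b
      using that kc by (auto simp: pf_gt_def df_gt_def)
    have "pf_gt k (?f a) (?f b) = df_gt (?f a) (?f b)" using pf_df fA that by blast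
    also have "\<dots> = df_gt b a" using df_rev that by blast
    also have "\<dots> = pf_gt k b a" using pf_df[OF that(2,1)] by (rule sym)
    finally show ?thesis .
  qed
  have "count_adj_from df_gt None (rev_runs ?A ?f [] (annotate w)) = count_adj_from df_gt None (annotate w)"
    using count_adj_from_rev_runs[of ?A df_gt ?f, OF df_alike df_rev fA, of None "[]"] by simp
  moreover have "count_adj_from (pf_gt k) None (rev_runs ?A ?f [] (annotate w)) =
      count_adj_from (pf_gt k) None (annotate w)"
    using count_adj_from_rev_runs[of ?A "pf_gt k" ?f, OF pf_alike pf_rev fA, of None "[]"] by simp
  ultimately show "des_word (colour_swap c w) = des_word w" "pf_des k (colour_swap c w) = pf_des k w"
    unfolding des_word_annotate pf_des_def ann count_adj_def .
qed

lemma Pos_colour_swap: "1 \<le> c \<Longrightarrow> Pos (colour_swap c w) = Pos w"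
  unfolding Pos_def colour_swap_def by (rule filter_rev_runs) auto

lemma count_mset_map_involution:
  assumes "\<And>x. g (g x) = x"
  shows "count (mset (map g w)) y = count (mset w) (g y)"
proof (induction w)
  case (Cons a w)
  have "g a = y \<longleftrightarrow> a = g y" using assms by metis
  then show ?case using Cons by simp
qed simp

lemma mset_colour_swap: "mset (colour_swap c w) = mset (map (transpose (- int c) (- int c - 1)) w)"
proof -
  have "mset (colour_swap c w) =
      image_mset (\<lambda>x. if x \<in> {- int c, - int c - 1} then transpose (- int c) (- int c - 1) x else x) (mset w)"
    unfolding colour_swap_def by (rule mset_rev_runs[of "[]", simplified])
  also have "\<dots> = image_mset (transpose (- int c) (- int c - 1)) (mset w)"
    by (rule image_mset_cong) auto
  finally show ?thesis by simp
qed

lemma colour_swap_in_df_words: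
  assumes c: "1 \<le> c" "c + 1 < k" and m: "length m = k" and w: "w \<in> df_words n k m"
  shows "colour_swap c w \<in> df_words n k (m[c - 1 := m ! c, c := m ! (c - 1)])"
proof -
  let ?t = "transpose (- int c) (- int c - 1)"
  have ms: "mset (colour_swap c w) = mset (map ?t w)" by (rule mset_colour_swap)
  then have "length (colour_swap c w) = length w" "set (colour_swap c w) = ?t ` set w"
    by (metis length_map size_mset, metis list.set_map set_mset_mset)
  moreover have "\<forall>x\<in>?t ` set w. x \<noteq> 0 \<and> - int k \<le> x"
    using df_words_letters[OF w] c by (auto simp: transpose_def)
  moreover have "count (mset (colour_swap c w)) (- int i) = m[c - 1 := m ! c, c := m ! (c - 1)] ! (i - 1)"
    if i: "i \<in> {1..k}" for i
  proof -
    have counts: "count (mset w) (- int j) = m ! (j - 1)" if "j \<in> {1..k}" for j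
      using w that by (simp add: df_words_def)
    have "count (mset (colour_swap c w)) (- int i) = count (mset w) (?t (- int i))"
      unfolding ms by (rule count_mset_map_involution) simp
    also have "?t (- int i) = - int (transpose c (c + 1) i)"
      by (auto simp: transpose_def)
    finally show ?thesis
      using counts[of "transpose c (c + 1) i"] i c m
      by (cases "i = c"; cases "i = c + 1") (auto simp: transpose_def nth_list_update)
  qed
  ultimately show ?thesis
    using w Pos_colour_swap[OF c(1)] by (simp add: df_words_def)
qed

definition bij_preserving :: "('a \<Rightarrow> 'b) \<Rightarrow> 'a set \<Rightarrow> 'a set \<Rightarrow> bool" where
  "bij_preserving st A B \<longleftrightarrow> (\<exists>F. bij_betw F A B \<and> (\<forall>x\<in>A. st (F x) = st x))"

lemma bij_preserving_refl: "bij_preserving st A A"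
  unfolding bij_preserving_def by (intro exI[of _ id]) simp

lemma bij_preserving_trans:
  assumes "bij_preserving st A B" "bij_preserving st B C"
  shows "bij_preserving st A C"
proof -
  obtain F G where F: "bij_betw F A B" "\<forall>x\<in>A. st (F x) = st x"
    and G: "bij_betw G B C" "\<forall>x\<in>B. st (G x) = st x"
    using assms unfolding bij_preserving_def by blast
  have "bij_betw (G \<circ> F) A C" using F(1) G(1) by (rule bij_betw_trans)
  moreover have "\<forall>x\<in>A. st ((G \<circ> F) x) = st x" using F G bij_betwE[OF F(1)] by auto
  ultimately show ?thesis unfolding bij_preserving_def by blast
qed

abbreviation word_stats :: "nat \<Rightarrow> int list \<Rightarrow> nat \<times> nat \<times> int list" where
  "word_stats k w \<equiv> (des_word w, pf_des k w, Pos w)"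

lemma bij_preserving_colour_swap:
  assumes c: "1 \<le> c" "c + 1 < k" and m: "length m = k"
  shows "bij_preserving (word_stats k) (df_words n k m) (df_words n k (m[c - 1 := m ! c, c := m ! (c - 1)]))"
proof -
  let ?m' = "m[c - 1 := m ! c, c := m ! (c - 1)]"
  have swap_back: "?m'[c - 1 := ?m' ! c, c := ?m' ! (c - 1)] = m"
    using c m by (auto intro!: nth_equalityI simp: nth_list_update)
  have "colour_swap c w \<in> df_words n k m" if "w \<in> df_words n k ?m'" for w
    using colour_swap_in_df_words[OF c _ that, unfolded swap_back] m by simp
  then have "bij_betw (colour_swap c) (df_words n k m) (df_words n k ?m')"
    using colour_swap_in_df_words[OF c m]
    by (intro bij_betwI[where g = "colour_swap c"]) (auto simp: colour_swap_involutive)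
  then show ?thesis
    unfolding bij_preserving_def using colour_swap_stats[OF c] Pos_colour_swap c by auto
qed

definition adj_transp :: "'a list \<Rightarrow> 'a list \<Rightarrow> bool" where
  "adj_transp a b \<longleftrightarrow> (\<exists>i. Suc i < length a \<and> b = a[i := a ! Suc i, Suc i := a ! i])"

lemma rtranclp_adj_transp_Cons: "adj_transp\<^sup>*\<^sup>* a b \<Longrightarrow> adj_transp\<^sup>*\<^sup>* (x # a) (x # b)"
proof (induction rule: rtranclp_induct)
  case (step b c)
  then obtain i where "Suc i < length b" "c = b[i := b ! Suc i, Suc i := b ! i]"
    unfolding adj_transp_def by blast
  then have "adj_transp (x # b) (x # c)"
    unfolding adj_transp_def by (intro exI[of _ "Suc i"]) simp
  then show ?case using step.IH by simp
qed simp

lemma rtranclp_adj_transp_move: "adj_transp\<^sup>*\<^sup>* (x # ys1 @ ys2) (ys1 @ x # ys2)"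
proof (induction ys1)
  case (Cons y ys1)
  have "adj_transp (x # y # ys1 @ ys2) (y # x # ys1 @ ys2)"
    unfolding adj_transp_def by (intro exI[of _ 0]) simp
  then show ?case
    using rtranclp_adj_transp_Cons[OF Cons.IH] by (simp add: converse_rtranclp_into_rtranclp)
qed simp

lemma rtranclp_adj_transp_if_mset_eq: "mset xs = mset ys \<Longrightarrow> adj_transp\<^sup>*\<^sup>* xs ys"
proof (induction xs arbitrary: ys)
  case (Cons x xs)
  have "x \<in> set ys" using Cons.prems by (metis list.set_intros(1) set_mset_mset)
  then obtain ys1 ys2 where ys: "ys = ys1 @ x # ys2" by (meson split_list)
  then have "adj_transp\<^sup>*\<^sup>* xs (ys1 @ ys2)" using Cons by simp
  then show ?case
    using rtranclp_adj_transp_Cons rtranclp_adj_transp_move ys by (metis rtranclp_trans)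
qed simp

lemma bij_preserving_permute_colours:
  assumes "adj_transp\<^sup>*\<^sup>* xs ys" "length xs + 1 = k"
  shows "bij_preserving (word_stats k) (df_words n k (xs @ [z])) (df_words n k (ys @ [z]))"
  using assms(1)
proof (induction rule: rtranclp_induct)
  case (step b c)
  have "length b = length xs" using step.hyps(1)
    by (induction rule: rtranclp_induct) (auto simp: adj_transp_def)
  moreover obtain i where i: "Suc i < length b" "c = b[i := b ! Suc i, Suc i := b ! i]"
    using step.hyps(2) unfolding adj_transp_def by blast
  moreover have "c @ [z] = (b @ [z])[Suc i - 1 := (b @ [z]) ! Suc i, Suc i := (b @ [z]) ! (Suc i - 1)]"
    using i by (simp add: nth_append list_update_append)
  ultimately have "bij_preserving (word_stats k) (df_words n k (b @ [z])) (df_words n k (c @ [z]))"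
    using bij_preserving_colour_swap[of "Suc i" k "b @ [z]" n] assms(2) by simp
  then show ?case using step.IH bij_preserving_trans by blast
qed (rule bij_preserving_refl)

lemma mset_permuted_prefix:
  assumes m: "length m = k" and \<tau>: "\<tau> permutes {1..k-1}"
  shows "mset (map (\<lambda>i. m ! (\<tau> i - 1)) [1..<k]) = mset (butlast m)"
proof -
  have "{1..k-1} = {1..<k}" by auto
  then have \<tau>': "\<tau> permutes {1..<k}"
    using \<tau> by (simp only:)
  have "image_mset \<tau> (mset_set {1..<k}) = mset_set {1..<k}"
    using image_mset_mset_set[OF permutes_inj_on[OF \<tau>']] permutes_image[OF \<tau>'] by simp
  then have "mset (map \<tau> [1..<k]) = mset [1..<k]"
    by (simp add: mset_upt)
  then have "mset (map (\<lambda>j. m ! (j - 1)) (map \<tau> [1..<k])) = mset (map (\<lambda>j. m ! (j - 1)) [1..<k])"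
    by (simp only: mset_map)
  then have "mset (map (\<lambda>i. m ! (\<tau> i - 1)) [1..<k]) = mset (map (\<lambda>j. m ! (j - 1)) [1..<k])"
    by (simp add: comp_def)
  also have "map (\<lambda>j. m ! (j - 1)) [1..<k] = butlast m"
    using m by (intro nth_equalityI) (auto simp: nth_butlast)
  finally show ?thesis .
qed

lemma df_words_exchange:
  assumes k: "k > 0" and m: "length m = k" and \<tau>: "\<tau> permutes {1..k-1}"
  defines "m' \<equiv> map (\<lambda>i. m ! (\<tau> i - 1)) [1..<k] @ [m ! (k - 1)]"
  shows "\<exists>F. bij_betw F (df_words n k m) (df_words n k m') \<and>
     (\<forall>w\<in>df_words n k m. des_word (F w) = pf_des k w \<and> pf_des k (F w) = des_word w \<and> Pos (F w) = Pos w)"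
proof -
  have ne: "m \<noteq> []" using m k by auto
  then have split: "m = butlast m @ [m ! (k - 1)]"
    using append_butlast_last_id[OF ne] last_conv_nth[OF ne] m by simp
  have "adj_transp\<^sup>*\<^sup>* (butlast m) (map (\<lambda>i. m ! (\<tau> i - 1)) [1..<k])"
    by (rule rtranclp_adj_transp_if_mset_eq) (rule mset_permuted_prefix[OF m \<tau>, symmetric])
  from bij_preserving_permute_colours[OF this, of k n "m ! (k - 1)", folded split]
  have "bij_preserving (word_stats k) (df_words n k m) (df_words n k m')"
    unfolding m'_def using m k by simp
  then obtain F where F: "bij_betw F (df_words n k m) (df_words n k m')"
    "\<forall>w\<in>df_words n k m. word_stats k (F w) = word_stats k w"
    unfolding bij_preserving_def by blast
  have "bij_betw (swap_des_dez k \<circ> F) (df_words n k m) (df_words n k m')"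
    using F(1) bij_swap_des_dez[OF k] by (rule bij_betw_trans)
  moreover have "des_word (swap_des_dez k (F w)) = pf_des k w \<and> pf_des k (swap_des_dez k (F w)) = des_word w \<and>
      Pos (swap_des_dez k (F w)) = Pos w" if "w \<in> df_words n k m" for w
  proof -
    have "F w \<in> df_words n k m'" using F(1) that bij_betwE by blast
    then show ?thesis using swap_des_dez_stats[OF k] Pos_swap_des_dez F(2) that by simp
  qed
  ultimately show ?thesis by (intro exI[of _ "swap_des_dez k \<circ> F"]) simp
qed

definition rank :: "'a::linorder set \<Rightarrow> 'a \<Rightarrow> nat" where
  "rank S y = card {x \<in> S. x \<le> y}"

lemma rank_less_iff:
  assumes "finite S" "x \<in> S" "y \<in> S"
  shows "rank S x < rank S y \<longleftrightarrow> x < y"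
proof
  assume "x < y"
  then have "y \<notin> {z \<in> S. z \<le> x}" "{z \<in> S. z \<le> x} \<subseteq> {z \<in> S. z \<le> y}" by auto
  then have "{z \<in> S. z \<le> x} \<subset> {z \<in> S. z \<le> y}" using assms(3) by blast
  then show "rank S x < rank S y" unfolding rank_def using assms(1) by (simp add: psubset_card_mono)
next
  assume less: "rank S x < rank S y"
  show "x < y"
  proof (rule ccontr)
    assume "\<not> x < y"
    then have "{z \<in> S. z \<le> y} \<subseteq> {z \<in> S. z \<le> x}" by auto
    then have "rank S y \<le> rank S x" unfolding rank_def using assms(1) by (simp add: card_mono)
    then show False using less by simp
  qed
qed

lemma rank_inj: "finite S \<Longrightarrow> x \<in> S \<Longrightarrow> y \<in> S \<Longrightarrow> rank S x = rank S y \<Longrightarrow> x = y"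
  using rank_less_iff[of S x y] rank_less_iff[of S y x] by (cases x y rule: linorder_cases) auto

lemma rank_pos: "finite S \<Longrightarrow> x \<in> S \<Longrightarrow> 1 \<le> rank S x"
proof -
  assume "finite S" "x \<in> S"
  then have "card {z \<in> S. z \<le> x} > 0" by (auto simp: card_gt_0_iff)
  then show ?thesis unfolding rank_def by simp
qed

lemma rank_eq_card_less: "finite S \<Longrightarrow> x \<in> S \<Longrightarrow> rank S x = card {z \<in> S. z < x} + 1"
proof -
  assume "finite S" "x \<in> S"
  moreover have "{z \<in> S. z \<le> x} = insert x {z \<in> S. z < x}" using \<open>x \<in> S\<close> by auto
  ultimately show ?thesis unfolding rank_def by simp
qed

lemma rank_image: "finite S \<Longrightarrow> rank S ` S = {1..card S}"
proof -
  assume fin: "finite S"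
  have "rank S ` S \<subseteq> {1..card S}"
    using rank_pos[OF fin] fin by (auto simp: rank_def intro: card_mono)
  moreover have "card (rank S ` S) = card {1..card S}"
    using rank_inj[OF fin] by (simp add: card_image inj_on_def)
  ultimately show ?thesis by (simp add: card_subset_eq)
qed

lemma rank_sorted_nth:
  assumes sorted: "sorted_wrt (<) L" and j: "j < length L"
  shows "rank (set L) (L ! j) = Suc j"
proof -
  have "{x \<in> set L. x \<le> L ! j} = (\<lambda>t. L ! t) ` {..j}"
  proof (rule set_eqI, rule iffI)
    fix x assume "x \<in> {x \<in> set L. x \<le> L ! j}"
    then obtain t where t: "t < length L" "x = L ! t" "L ! t \<le> L ! j"
      by (auto simp: in_set_conv_nth)
    then have "t \<le> j" using sorted_wrt_nth_less[OF sorted, of j t] j by (meson leD not_le_imp_less)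
    then show "x \<in> (\<lambda>t. L ! t) ` {..j}" using t by auto
  next
    fix x assume "x \<in> (\<lambda>t. L ! t) ` {..j}"
    then obtain t where t: "t \<le> j" "x = L ! t" by auto
    then have "L ! t \<le> L ! j"
      using sorted_wrt_nth_less[OF sorted, of t j] j by (cases "t = j") auto
    then show "x \<in> {x \<in> set L. x \<le> L ! j}" using t j by auto
  qed
  moreover have "inj_on (\<lambda>t. L ! t) {..j}"
    using sorted j unfolding strict_sorted_iff by (auto simp: inj_on_def nth_eq_iff_index_eq)
  ultimately show ?thesis unfolding rank_def by (simp add: card_image)
qed

lemma red_pos_eq_rank:
  "red_pos w = map (\<lambda>x. if 0 < x then int (rank {y \<in> set w. 0 < y} x) else x) w"
  unfolding red_pos_def rank_def by (simp add: conj_assoc)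

lemma des_word_red_pos: "des_word (red_pos w) = des_word w"
proof -
  define P where "P = {y \<in> set w. 0 < y}"
  define r where "r x = (if 0 < x then int (rank P x) else x)" for x
  have "r a > r b \<longleftrightarrow> a > b" if "a \<in> set w" "b \<in> set w" for a b
    using that rank_less_iff[of P b a] rank_pos[of P a] rank_pos[of P b] unfolding r_def P_def
    by (cases "0 < a"; cases "0 < b") auto
  then have "count_adj (\<lambda>a b. r a > r b) w = count_adj (\<lambda>a b. a > b) w"
    by (intro count_adj_cong) auto
  then show ?thesis
    unfolding des_word_eq_count_adj red_pos_eq_rank count_adj_map P_def[symmetric] r_def[symmetric] .
qed

section \<open>The derangement form of an arrangement\<close>

definition NFIX :: "nat \<Rightarrow> (nat \<Rightarrow> nat) \<Rightarrow> nat set" where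
  "NFIX n \<pi> = {1..n} - FIX n \<pi>"

definition raw_df :: "nat \<Rightarrow> arrangement \<Rightarrow> int list" where
  "raw_df n a = map (\<lambda>i. if i \<in> FIX n (fst a) then snd a i else int (fst a i)) [1..<n+1]"

lemma df_eq_red_pos: "df n k a = red_pos (raw_df n a)"
  unfolding df_def raw_df_def ..

lemma arrangementsD:
  assumes "(\<pi>, \<phi>) \<in> arrangements n k"
  shows "\<pi> permutes {1..n}" "i \<in> FIX n \<pi> \<Longrightarrow> \<phi> i \<in> {- int k..-1}" "i \<notin> FIX n \<pi> \<Longrightarrow> \<phi> i = 0"
  using assms unfolding arrangements_def by (auto split: if_splits)

lemma FIX_subset: "FIX n \<pi> \<subseteq> {1..n}"
  by (auto simp: FIX_def)

lemma finite_NFIX: "finite (NFIX n \<pi>)"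
  by (simp add: NFIX_def)

lemma NFIX_iff: "p \<in> NFIX n \<pi> \<longleftrightarrow> p \<in> {1..n} \<and> \<pi> p \<noteq> p"
  by (auto simp: NFIX_def FIX_def)

lemma permutes_NFIX:
  assumes "\<pi> permutes {1..n}"
  shows "p \<in> NFIX n \<pi> \<Longrightarrow> \<pi> p \<in> NFIX n \<pi>" "\<pi> ` NFIX n \<pi> = NFIX n \<pi>"
proof -
  show closed: "\<pi> p \<in> NFIX n \<pi>" if "p \<in> NFIX n \<pi>" for p
    using that permutes_in_image[OF assms] permutes_inj[OF assms]
      by (auto simp: NFIX_iff dest: injD)
  show "\<pi> ` NFIX n \<pi> = NFIX n \<pi>"
    using closed permutes_inj_on[OF assms] finite_NFIX
      by (intro endo_inj_surj) (auto simp: inj_on_subset)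
qed

lemma rank_int_image: "rank (int ` S) (int x) = rank S x"
proof -
  have "{y \<in> int ` S. y \<le> int x} = int ` {z \<in> S. z \<le> x}" by auto
  then show ?thesis unfolding rank_def by (simp add: card_image)
qed

lemma pos_letters_raw_df:
  assumes a: "(\<pi>, \<phi>) \<in> arrangements n k"
  shows "{y \<in> set (raw_df n (\<pi>, \<phi>)). 0 < y} = int ` NFIX n \<pi>"
proof -
  have set_raw: "set (raw_df n (\<pi>, \<phi>)) = (\<lambda>p. if p \<in> FIX n \<pi> then \<phi> p else int (\<pi> p)) ` {1..n}"
    unfolding raw_df_def by auto
  have "{y \<in> set (raw_df n (\<pi>, \<phi>)). 0 < y} = (\<lambda>p. int (\<pi> p)) ` NFIX n \<pi>"
  proof (rule set_eqI, rule iffI)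
    fix y assume "y \<in> {y \<in> set (raw_df n (\<pi>, \<phi>)). 0 < y}"
    then obtain p where p: "p \<in> {1..n}" "y = (if p \<in> FIX n \<pi> then \<phi> p else int (\<pi> p))" "0 < y"
      unfolding set_raw by auto
    then have "p \<notin> FIX n \<pi>" using arrangementsD(2)[OF a, of p] by (auto split: if_splits)
    then show "y \<in> (\<lambda>p. int (\<pi> p)) ` NFIX n \<pi>" using p by (auto simp: NFIX_def)
  next
    fix y assume "y \<in> (\<lambda>p. int (\<pi> p)) ` NFIX n \<pi>"
    then obtain p where p: "p \<in> NFIX n \<pi>" "y = int (\<pi> p)" by auto
    then have "\<pi> p \<in> {1..n}" using permutes_NFIX(1)[OF arrangementsD(1)[OF a]]
      by (simp add: NFIX_def)
    moreover have "p \<in> {1..n}" "p \<notin> FIX n \<pi>" using p(1) by (auto simp: NFIX_def)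
    ultimately show "y \<in> {y \<in> set (raw_df n (\<pi>, \<phi>)). 0 < y}"
      using p(2) unfolding set_raw by force
  qed
  also have "\<dots> = int ` \<pi> ` NFIX n \<pi>" by auto
  finally show ?thesis using permutes_NFIX(2)[OF arrangementsD(1)[OF a]] by simp
qed

lemma df_eq_map:
  assumes a: "(\<pi>, \<phi>) \<in> arrangements n k"
  shows "df n k (\<pi>, \<phi>) = map (\<lambda>p. if p \<in> FIX n \<pi> then \<phi> p else int (rank (NFIX n \<pi>) (\<pi> p))) [1..<n+1]"
  unfolding df_eq_red_pos red_pos_eq_rank pos_letters_raw_df[OF a]
  unfolding raw_df_def map_map fst_conv snd_conv
proof (rule map_cong[OF refl])
  fix p assume "p \<in> set [1..<n+1]"
  then have "p \<in> {1..n}" by auto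
  then have "\<pi> p \<in> {1..n}" using permutes_in_image[OF arrangementsD(1)[OF a]] by (simp only:)
  then have "0 < int (\<pi> p)" by simp
  then show "((\<lambda>x. if 0 < x then int (rank (int ` NFIX n \<pi>) x) else x) \<circ>
      (\<lambda>i. if i \<in> FIX n \<pi> then \<phi> i else int (\<pi> i))) p =
    (if p \<in> FIX n \<pi> then \<phi> p else int (rank (NFIX n \<pi>) (\<pi> p)))"
    using arrangementsD(2)[OF a, of p] by (auto simp: rank_int_image)
qed

lemma df_nth:
  assumes a: "(\<pi>, \<phi>) \<in> arrangements n k" and i: "i < n"
  shows "df n k (\<pi>, \<phi>) ! i = (if Suc i \<in> FIX n \<pi> then \<phi> (Suc i) else int (rank (NFIX n \<pi>) (\<pi> (Suc i))))"
  using i by (simp add: df_eq_map[OF a] del: upt_Suc)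

lemma length_df [simp]: "length (df n k a) = n"
  by (simp add: df_def red_pos_def)

lemma df_pos_iff:
  assumes a: "(\<pi>, \<phi>) \<in> arrangements n k" and i: "i < n"
  shows "0 < df n k (\<pi>, \<phi>) ! i \<longleftrightarrow> Suc i \<in> NFIX n \<pi>"
  using arrangementsD(2)[OF a, of "Suc i"] rank_pos[OF finite_NFIX permutes_NFIX(1)[OF arrangementsD(1)[OF a]]] i
  by (force simp: df_nth[OF a i] NFIX_def)

lemma card_pos_prefix_df:
  assumes a: "(\<pi>, \<phi>) \<in> arrangements n k" and i: "i \<le> n"
  shows "length (filter (\<lambda>x. x > 0) (take i (df n k (\<pi>, \<phi>)))) = card {p \<in> NFIX n \<pi>. p \<le> i}"
proof -
  have "length (filter (\<lambda>x. x > 0) (take i (df n k (\<pi>, \<phi>)))) = card {j. j < i \<and> 0 < df n k (\<pi>, \<phi>) ! j}"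
    unfolding length_filter_conv_card using i
    by (intro arg_cong[where f = card]) (auto simp: min_def nth_take)
  also have "{j. j < i \<and> 0 < df n k (\<pi>, \<phi>) ! j} = {j. j < i \<and> Suc j \<in> NFIX n \<pi>}"
    using df_pos_iff[OF a] i by auto
  also have "card \<dots> = card (Suc ` {j. j < i \<and> Suc j \<in> NFIX n \<pi>})" by (simp add: card_image)
  also have "Suc ` {j. j < i \<and> Suc j \<in> NFIX n \<pi>} = {p \<in> NFIX n \<pi>. p \<le> i}"
  proof (rule set_eqI, rule iffI)
    fix p assume "p \<in> {p \<in> NFIX n \<pi>. p \<le> i}"
    moreover then have "p \<ge> 1" by (auto simp: NFIX_def)
    ultimately show "p \<in> Suc ` {j. j < i \<and> Suc j \<in> NFIX n \<pi>}"
      by (auto intro!: image_eqI[of _ _ "p - 1"])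
  qed auto
  finally show ?thesis .
qed

lemma annotate_df_nth:
  assumes a: "(\<pi>, \<phi>) \<in> arrangements n k" and i: "i < n"
  shows "annotate (df n k (\<pi>, \<phi>)) ! i = (if Suc i \<in> FIX n \<pi> then (\<phi> (Suc i), False)
            else (int (rank (NFIX n \<pi>) (\<pi> (Suc i))), Suc i < \<pi> (Suc i)))"
proof (cases "Suc i \<in> FIX n \<pi>")
  case True
  then show ?thesis
    using i df_nth[OF a i] df_pos_iff[OF a i] by (simp add: annotate_def annotate_from_nth NFIX_def)
next
  case False
  then have p: "Suc i \<in> NFIX n \<pi>" using i by (simp add: NFIX_def)
  have "card {p \<in> NFIX n \<pi>. p \<le> i} + 1 = rank (NFIX n \<pi>) (Suc i)"
    using rank_eq_card_less[OF finite_NFIX p] by (simp add: less_Suc_eq_le)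
  then have "int (rank (NFIX n \<pi>) (\<pi> (Suc i))) > int (card {p \<in> NFIX n \<pi>. p \<le> i}) + 1 \<longleftrightarrow>
      rank (NFIX n \<pi>) (Suc i) < rank (NFIX n \<pi>) (\<pi> (Suc i))" by linarith
  also have "\<dots> \<longleftrightarrow> Suc i < \<pi> (Suc i)"
    using rank_less_iff[OF finite_NFIX p permutes_NFIX(1)[OF arrangementsD(1)[OF a] p]] .
  finally show ?thesis
    using False i p df_nth[OF a i] df_pos_iff[OF a i] card_pos_prefix_df[OF a, of i]
    by (simp add: annotate_def annotate_from_nth)
qed

definition raw_pf :: "nat \<Rightarrow> nat \<Rightarrow> arrangement \<Rightarrow> int list" where
  "raw_pf n k a =
     map (\<lambda>i. if i \<in> FIX n (fst a) \<and> snd a i \<noteq> - int k then snd a i else int (fst a i)) [1..<n+1]"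

lemma pf_eq_red_pos: "pf n k a = red_pos (raw_pf n k a)"
  unfolding pf_def raw_pf_def ..

lemma pf_gt_annotate_df:
  assumes a: "(\<pi>, \<phi>) \<in> arrangements n k" and i: "Suc i < n"
  shows "raw_pf n k (\<pi>, \<phi>) ! i > raw_pf n k (\<pi>, \<phi>) ! Suc i \<longleftrightarrow>
         pf_gt k (annotate (df n k (\<pi>, \<phi>)) ! i) (annotate (df n k (\<pi>, \<phi>)) ! Suc i)"
proof -
  define p where "p = Suc i"
  have perm: "\<pi> permutes {1..n}" using arrangementsD(1)[OF a] .
  have pq: "p \<in> {1..n}" "Suc p \<in> {1..n}" using i unfolding p_def by auto
  have fixed: "\<pi> x = x" "\<phi> x \<in> {- int k..-1}" if "x \<in> FIX n \<pi>" for x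
    using that arrangementsD(2)[OF a] by (auto simp: FIX_def)
  have moved: "x \<in> NFIX n \<pi>" "\<pi> x \<in> NFIX n \<pi>" "\<pi> x \<noteq> x" "1 \<le> rank (NFIX n \<pi>) (\<pi> x)"
    if "x \<in> {1..n}" "x \<notin> FIX n \<pi>" for x
    using that permutes_NFIX(1)[OF perm] rank_pos[OF finite_NFIX] by (auto simp: NFIX_def FIX_def)
  have inj: "\<pi> x = \<pi> y \<Longrightarrow> x = y" for x y using permutes_inj[OF perm] by (simp add: inj_eq)
  have raw: "raw_pf n k (\<pi>, \<phi>) ! i = (if p \<in> FIX n \<pi> \<and> \<phi> p \<noteq> - int k then \<phi> p else int (\<pi> p))"
    "raw_pf n k (\<pi>, \<phi>) ! Suc i =
       (if Suc p \<in> FIX n \<pi> \<and> \<phi> (Suc p) \<noteq> - int k then \<phi> (Suc p) else int (\<pi> (Suc p)))"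
    using i unfolding p_def raw_pf_def by (simp_all del: upt_Suc)
  have ann: "annotate (df n k (\<pi>, \<phi>)) ! i = (if p \<in> FIX n \<pi> then (\<phi> p, False)
      else (int (rank (NFIX n \<pi>) (\<pi> p)), p < \<pi> p))"
    "annotate (df n k (\<pi>, \<phi>)) ! Suc i = (if Suc p \<in> FIX n \<pi> then (\<phi> (Suc p), False)
      else (int (rank (NFIX n \<pi>) (\<pi> (Suc p))), Suc p < \<pi> (Suc p)))"
    using annotate_df_nth[OF a, of i] annotate_df_nth[OF a, of "Suc i"] i unfolding p_def
      by simp_all
  consider "p \<in> FIX n \<pi>" "Suc p \<in> FIX n \<pi>" | "p \<in> FIX n \<pi>" "Suc p \<notin> FIX n \<pi>"
    | "p \<notin> FIX n \<pi>" "Suc p \<in> FIX n \<pi>" | "p \<notin> FIX n \<pi>" "Suc p \<notin> FIX n \<pi>" by blast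
  then show ?thesis
  proof cases
    case 1
    then show ?thesis using fixed[OF 1(1)] fixed[OF 1(2)] \<open>p \<in> FIX n \<pi>\<close> unfolding raw ann
      by (auto simp: pf_gt_def)
  next
    case 2
    then have "\<pi> (Suc p) \<noteq> p" using fixed(1)[OF 2(1)] inj by (metis n_not_Suc_n)
    then show ?thesis using 2 fixed[OF 2(1)] moved[OF pq(2) 2(2)] unfolding raw ann
      by (auto simp: pf_gt_def)
  next
    case 3
    then have "\<pi> p \<noteq> Suc p" using fixed(1)[OF 3(2)] inj by (metis n_not_Suc_n)
    then show ?thesis using 3 fixed[OF 3(2)] moved[OF pq(1) 3(1)] unfolding raw ann
      by (auto simp: pf_gt_def)
  next
    case 4
    then show ?thesis
      using moved[OF pq(1) 4(1)] moved[OF pq(2) 4(2)] rank_less_iff[OF finite_NFIX] unfolding raw ann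
        by (auto simp: pf_gt_def)
  qed
qed

lemma des_arr_eq_pf_des:
  assumes a: "a \<in> arrangements n k"
  shows "des_arr n k a = pf_des k (df n k a)"
proof -
  obtain \<pi> \<phi> where a_eq: "a = (\<pi>, \<phi>)" by force
  have "des_arr n k a = card {i. Suc i < n \<and> raw_pf n k a ! i > raw_pf n k a ! Suc i}"
    unfolding des_arr_def pf_eq_red_pos des_word_red_pos unfolding des_word_def
    by (simp add: raw_pf_def)
  also have "\<dots> = card {i. Suc i < n \<and> pf_gt k (annotate (df n k a) ! i) (annotate (df n k a) ! Suc i)}"
    using pf_gt_annotate_df assms unfolding a_eq by (intro arg_cong[where f = card]) blast
  also have "\<dots> = pf_des k (df n k a)"
    unfolding pf_des_def count_adj_card by (simp add: annotate_def)
  finally show ?thesis .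
qed

lemma count_mset_map_upt: "count (mset (map f [a..<b])) x = card {i \<in> {a..<b}. f i = x}"
proof (induction b)
  case (Suc b)
  have "{i \<in> {a..<Suc b}. f i = x} = {i \<in> {a..<b}. f i = x} \<union> (if a \<le> b \<and> f b = x then {b} else {})"
    by (auto simp: less_Suc_eq)
  then show ?case using Suc by auto
qed simp

lemma fix_i_eq_count_df:
  assumes a: "a \<in> arrangements n k"
  shows "fix_i n i a = count (mset (df n k a)) (- int i)"
proof -
  obtain \<pi> \<phi> where a_eq: "a = (\<pi>, \<phi>)" by force
  note a = a[unfolded a_eq]
  define g where "g p = (if p \<in> FIX n \<pi> then \<phi> p else int (rank (NFIX n \<pi>) (\<pi> p)))" for p
  have pos: "0 < rank (NFIX n \<pi>) (\<pi> p)" if "p \<in> {1..<n+1}" "p \<notin> FIX n \<pi>" for p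
    using rank_pos[OF finite_NFIX permutes_NFIX(1)[OF arrangementsD(1)[OF a]]] that
    by (force simp: NFIX_def)
  have "{p \<in> {1..<n+1}. g p = - int i} = {p \<in> FIX n \<pi>. \<phi> p = - int i}"
  proof (rule set_eqI, rule iffI)
    fix p assume p: "p \<in> {p \<in> {1..<n+1}. g p = - int i}"
    show "p \<in> {p \<in> FIX n \<pi>. \<phi> p = - int i}"
    proof (cases "p \<in> FIX n \<pi>")
      case False
      then show ?thesis using p pos[of p] by (simp add: g_def)
    qed (use p in \<open>simp add: g_def\<close>)
  qed (use FIX_subset in \<open>force simp: g_def\<close>)
  then show ?thesis
    unfolding a_eq fix_i_def df_eq_map[OF a] g_def[symmetric] count_mset_map_upt by simp
qed

lemma Pos_df:
  assumes a: "(\<pi>, \<phi>) \<in> arrangements n k"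
  shows "Pos (df n k (\<pi>, \<phi>)) = map (\<lambda>p. int (rank (NFIX n \<pi>) (\<pi> p))) (filter (\<lambda>p. p \<in> NFIX n \<pi>) [1..<n+1])"
proof -
  define g where "g p = (if p \<in> FIX n \<pi> then \<phi> p else int (rank (NFIX n \<pi>) (\<pi> p)))" for p
  have "0 < g p \<longleftrightarrow> p \<in> NFIX n \<pi>" if "p \<in> set [1..<n+1]" for p
    using that arrangementsD(2)[OF a, of p] rank_pos[OF finite_NFIX permutes_NFIX(1)[OF arrangementsD(1)[OF a]]]
    by (force simp: g_def NFIX_def)
  then have "Pos (df n k (\<pi>, \<phi>)) = map g (filter (\<lambda>p. p \<in> NFIX n \<pi>) [1..<n+1])"
    unfolding Pos_def df_eq_map[OF a] g_def[symmetric] filter_map comp_def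
    by (metis (no_types, lifting) filter_cong)
  also have "\<dots> = map (\<lambda>p. int (rank (NFIX n \<pi>) (\<pi> p))) (filter (\<lambda>p. p \<in> NFIX n \<pi>) [1..<n+1])"
    by (rule map_cong) (auto simp: g_def NFIX_def)
  finally show ?thesis .
qed

lemma inj_on_rank_perm:
  assumes perm: "\<pi> permutes {1..n}"
  shows "inj_on (\<lambda>p. rank (NFIX n \<pi>) (\<pi> p)) (NFIX n \<pi>)"
proof (rule inj_onI)
  fix x y assume "x \<in> NFIX n \<pi>" "y \<in> NFIX n \<pi>" "rank (NFIX n \<pi>) (\<pi> x) = rank (NFIX n \<pi>) (\<pi> y)"
  then have "\<pi> x = \<pi> y"
    using rank_inj[OF finite_NFIX permutes_NFIX(1)[OF perm] permutes_NFIX(1)[OF perm]] by simp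
  then show "x = y" using permutes_inj[OF perm] by (simp add: inj_eq)
qed

lemma standard_derangement_Pos_df:
  assumes a: "(\<pi>, \<phi>) \<in> arrangements n k"
  shows "standard_derangement (Pos (df n k (\<pi>, \<phi>)))"
proof -
  have perm: "\<pi> permutes {1..n}" using arrangementsD(1)[OF a] .
  define L where "L = filter (\<lambda>p. p \<in> NFIX n \<pi>) [1..<n+1]"
  define r where "r p = int (rank (NFIX n \<pi>) (\<pi> p))" for p
  have sorted: "sorted_wrt (<) L" unfolding L_def by (intro sorted_wrt_filter sorted_wrt_upt)
  have setL: "set L = NFIX n \<pi>" unfolding L_def by (auto simp: NFIX_def)
  have "distinct L" using sorted strict_sorted_iff by blast
  then have lenL: "length L = card (NFIX n \<pi>)" using distinct_card setL by metis
  have D: "Pos (df n k (\<pi>, \<phi>)) = map r L" unfolding L_def r_def by (rule Pos_df[OF a])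
  have "inj_on r (NFIX n \<pi>)"
    unfolding r_def using inj_on_rank_perm[OF perm] by (simp add: inj_on_def)
  then have "distinct (map r L)" using \<open>distinct L\<close> setL by (simp add: distinct_map)
  moreover have "set (map r L) = {1..int (length (map r L))}"
  proof -
    have "set (map r L) = int ` rank (NFIX n \<pi>) ` \<pi> ` NFIX n \<pi>"
      unfolding setL[symmetric] r_def by auto
    also have "\<dots> = int ` {1..card (NFIX n \<pi>)}"
      by (simp only: permutes_NFIX(2)[OF perm] rank_image[OF finite_NFIX])
    also have "\<dots> = {1..int (card (NFIX n \<pi>))}"
      by (simp add: image_int_atLeastAtMost)
    finally show ?thesis using lenL by simp
  qed
  moreover have "map r L ! j \<noteq> int j + 1" if j: "j < length (map r L)" for j
  proof
    assume eq: "map r L ! j = int j + 1"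
    have Lj: "L ! j \<in> NFIX n \<pi>" using setL j nth_mem by fastforce
    have "rank (NFIX n \<pi>) (L ! j) = Suc j"
      using rank_sorted_nth[OF sorted] j setL by fastforce
    then have "rank (NFIX n \<pi>) (\<pi> (L ! j)) = rank (NFIX n \<pi>) (L ! j)"
      using eq j by (simp add: r_def)
    then have "\<pi> (L ! j) = L ! j"
      using rank_inj[OF finite_NFIX permutes_NFIX(1)[OF perm Lj] Lj] by simp
    then show False using Lj by (simp add: NFIX_iff)
  qed
  ultimately show ?thesis unfolding D standard_derangement_def by blast
qed

lemma df_in_df_words:
  assumes a: "a \<in> arrangements_m n k m"
  shows "df n k a \<in> df_words n k m"
proof -
  obtain \<pi> \<phi> where a_eq: "a = (\<pi>, \<phi>)" by force
  have a0: "(\<pi>, \<phi>) \<in> arrangements n k" using a unfolding a_eq arrangements_m_def by simp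
  have "x \<noteq> 0 \<and> - int k \<le> x" if x: "x \<in> set (df n k (\<pi>, \<phi>))" for x
  proof -
    have "x \<in> (\<lambda>p. if p \<in> FIX n \<pi> then \<phi> p else int (rank (NFIX n \<pi>) (\<pi> p))) ` {1..<n+1}"
      using x[unfolded df_eq_map[OF a0]] by (simp only: set_map set_upt)
    then obtain p where p: "p \<in> {1..<n+1}" "x = (if p \<in> FIX n \<pi> then \<phi> p else int (rank (NFIX n \<pi>) (\<pi> p)))"
      by blast
    show ?thesis
      using p arrangementsD(2)[OF a0, of p]
        rank_pos[OF finite_NFIX permutes_NFIX(1)[OF arrangementsD(1)[OF a0], of p]]
      by (auto simp: NFIX_def)
  qed
  moreover have "\<forall>i\<in>{1..k}. count (mset (df n k (\<pi>, \<phi>))) (- int i) = m ! (i - 1)"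
    using a fix_i_eq_count_df[OF a0] unfolding a_eq arrangements_m_def by auto
  ultimately show ?thesis
    unfolding a_eq df_words_def using standard_derangement_Pos_df[OF a0] by simp
qed

lemma NFIX_eq_if_df_eq:
  assumes a: "(\<pi>, \<phi>) \<in> arrangements n k" and b: "(\<pi>', \<phi>') \<in> arrangements n k"
    and eq: "df n k (\<pi>, \<phi>) = df n k (\<pi>', \<phi>')"
  shows "NFIX n \<pi> = NFIX n \<pi>'"
proof (rule set_eqI)
  fix p
  show "p \<in> NFIX n \<pi> \<longleftrightarrow> p \<in> NFIX n \<pi>'"
  proof (cases "p \<in> {1..n}")
    case True
    then have "p - 1 < n" "Suc (p - 1) = p" by auto
    then show ?thesis using df_pos_iff[OF a] df_pos_iff[OF b] eq by metis
  qed (auto simp: NFIX_def)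
qed

lemma df_eq_imp_eq:
  assumes a: "(\<pi>, \<phi>) \<in> arrangements n k" and b: "(\<pi>', \<phi>') \<in> arrangements n k"
    and eq: "df n k (\<pi>, \<phi>) = df n k (\<pi>', \<phi>')"
  shows "(\<pi>, \<phi>) = (\<pi>', \<phi>')"
proof -
  have NFIX_eq: "NFIX n \<pi> = NFIX n \<pi>'" by (rule NFIX_eq_if_df_eq[OF a b eq])
  then have FIX_eq: "FIX n \<pi> = FIX n \<pi>'"
    using FIX_subset unfolding NFIX_def by blast
  have at: "df n k (\<pi>, \<phi>) ! (p - 1) = df n k (\<pi>', \<phi>') ! (p - 1)" "p - 1 < n" "Suc (p - 1) = p"
    if "p \<in> {1..n}" for p
    using that eq by auto
  have "\<phi> p = \<phi>' p" for p
  proof (cases "p \<in> FIX n \<pi>")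
    case True
    then have "p \<in> {1..n}" using FIX_subset by blast
    then show ?thesis using at[of p] df_nth[OF a] df_nth[OF b] True FIX_eq by metis
  qed (use arrangementsD(3)[OF a] arrangementsD(3)[OF b] FIX_eq in auto)
  moreover have "\<pi> p = \<pi>' p" for p
  proof (cases "p \<in> NFIX n \<pi>")
    case True
    then have p: "p \<in> {1..n}" "p \<notin> FIX n \<pi>" "p \<notin> FIX n \<pi>'" using FIX_eq by (auto simp: NFIX_def)
    then have "rank (NFIX n \<pi>) (\<pi> p) = rank (NFIX n \<pi>) (\<pi>' p)"
      using at[OF p(1)] df_nth[OF a] df_nth[OF b] NFIX_eq by (metis of_nat_eq_iff)
    then show ?thesis
      using rank_inj[OF finite_NFIX] permutes_NFIX(1)[OF arrangementsD(1)[OF a] True]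
        permutes_NFIX(1)[OF arrangementsD(1)[OF b]] True NFIX_eq by metis
  next
    case False
    then have "p \<in> FIX n \<pi> \<and> p \<in> FIX n \<pi>' \<or> p \<notin> {1..n}"
      using FIX_eq by (auto simp: NFIX_def)
    then show ?thesis
      using permutes_not_in[OF arrangementsD(1)[OF a]] permutes_not_in[OF arrangementsD(1)[OF b]]
      by (auto simp: FIX_def)
  qed
  ultimately show ?thesis by auto
qed

lemma df_inj: "inj_on (df n k) (arrangements n k)"
  by (rule inj_onI) (metis df_eq_imp_eq surj_pair)

definition pos_positions :: "int list \<Rightarrow> nat list" where
  "pos_positions w = filter (\<lambda>p. 0 < w ! (p - 1)) [1..<length w + 1]"

text \<open>The inverse of \<open>df\<close>: if the \<open>j\<close>-th positive letter of \<open>w\<close> is \<open>d\<close>, the \<open>j\<close>-th positive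
  position is sent to the \<open>d\<close>-th one; negative letters become the colours of fixed points.\<close>

definition decode_df :: "int list \<Rightarrow> arrangement" where
  "decode_df w =
     (\<lambda>p. if p \<in> set (pos_positions w) then pos_positions w ! (nat (w ! (p - 1)) - 1) else p,
      \<lambda>p. if p \<in> {1..length w} \<and> w ! (p - 1) < 0 then w ! (p - 1) else 0)"

lemma sorted_pos_positions: "sorted_wrt (<) (pos_positions w)"
  unfolding pos_positions_def by (intro sorted_wrt_filter sorted_wrt_upt)

lemma set_pos_positions: "set (pos_positions w) = {p \<in> {1..length w}. 0 < w ! (p - 1)}"
  unfolding pos_positions_def by auto

lemma Pos_eq_map_pos_positions: "Pos w = map (\<lambda>p. w ! (p - 1)) (pos_positions w)"
proof -
  have "w = map (\<lambda>p. w ! (p - 1)) [1..<length w + 1]"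
    by (rule nth_equalityI) (simp_all del: upt_Suc)
  then show ?thesis
    unfolding Pos_def pos_positions_def by (metis (no_types, lifting) filter_map comp_def filter_cong)
qed

lemma length_Pos_eq: "length (Pos w) = length (pos_positions w)"
  by (simp add: Pos_eq_map_pos_positions)

lemma decode_perm_nth:
  "j < length (pos_positions w) \<Longrightarrow>
     fst (decode_df w) (pos_positions w ! j) = pos_positions w ! (nat (Pos w ! j) - 1)"
  by (simp add: decode_df_def Pos_eq_map_pos_positions)

lemma decode_perm_outside: "p \<notin> set (pos_positions w) \<Longrightarrow> fst (decode_df w) p = p"
  by (simp add: decode_df_def)

context
  fixes n k m w
  assumes w: "w \<in> df_words n k m"
begin

lemma length_df_word: "length w = n"
  using w by (simp add: df_words_def)

lemma df_word_letter: "p \<in> {1..n} \<Longrightarrow> w ! (p - 1) \<noteq> 0 \<and> - int k \<le> w ! (p - 1)"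
  using w length_df_word by (auto simp: df_words_def)

lemma Pos_nth_bounds:
  "j < length (pos_positions w) \<Longrightarrow> 1 \<le> Pos w ! j \<and> nat (Pos w ! j) - 1 < length (pos_positions w)"
  using w nth_mem[of j "Pos w"] length_Pos_eq unfolding df_words_def standard_derangement_def
    by auto

lemma decode_perm_permutes: "fst (decode_df w) permutes {1..n}"
proof -
  let ?L = "pos_positions w" and ?\<pi> = "fst (decode_df w)"
  have dist: "distinct ?L" using sorted_pos_positions strict_sorted_iff by blast
  have "distinct (Pos w)" using w by (simp add: df_words_def standard_derangement_def)
  have image: "?\<pi> p \<in> set ?L" if "p \<in> set ?L" for p
    using that Pos_nth_bounds decode_perm_nth by (metis in_set_conv_nth nth_mem)
  have "inj_on ?\<pi> (set ?L)"
  proof (rule inj_onI)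
    fix p q assume "p \<in> set ?L" "q \<in> set ?L" and eq: "?\<pi> p = ?\<pi> q"
    then obtain i j where ij: "i < length ?L" "p = ?L ! i" "j < length ?L" "q = ?L ! j"
      by (auto simp: in_set_conv_nth)
    then have "nat (Pos w ! i) - 1 = nat (Pos w ! j) - 1"
      using eq decode_perm_nth Pos_nth_bounds dist by (simp add: nth_eq_iff_index_eq)
    then have "Pos w ! i = Pos w ! j" using Pos_nth_bounds[OF ij(1)] Pos_nth_bounds[OF ij(3)]
      by linarith
    then show "p = q" using ij \<open>distinct (Pos w)\<close> length_Pos_eq by (simp add: nth_eq_iff_index_eq)
  qed
  then have "bij_betw ?\<pi> (set ?L) (set ?L)"
    using image by (simp add: bij_betw_def endo_inj_surj image_subsetI)
  then have "?\<pi> permutes set ?L"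
    using decode_perm_outside by (intro bij_imp_permutes) auto
  moreover have "set ?L \<subseteq> {1..n}" using length_df_word by (auto simp: set_pos_positions)
  ultimately show ?thesis by (rule permutes_subset)
qed

lemma FIX_decode: "FIX n (fst (decode_df w)) = {p \<in> {1..n}. w ! (p - 1) < 0}"
proof (rule set_eqI, rule iffI)
  let ?L = "pos_positions w"
  fix p assume p: "p \<in> FIX n (fst (decode_df w))"
  have "p \<notin> set ?L"
  proof
    assume "p \<in> set ?L"
    then obtain j where j: "j < length ?L" "p = ?L ! j" by (auto simp: in_set_conv_nth)
    then have "?L ! (nat (Pos w ! j) - 1) = ?L ! j" using p decode_perm_nth by (simp add: FIX_def)
    then have "nat (Pos w ! j) - 1 = j"
      using sorted_pos_positions strict_sorted_iff Pos_nth_bounds[OF j(1)] j(1) nth_eq_iff_index_eq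
        by metis
    then have "Pos w ! j = int j + 1" using Pos_nth_bounds[OF j(1)] by linarith
    then show False using w j(1) length_Pos_eq by (simp add: df_words_def standard_derangement_def)
  qed
  then show "p \<in> {p \<in> {1..n}. w ! (p - 1) < 0}"
    using p df_word_letter length_df_word by (force simp: FIX_def set_pos_positions)
next
  fix p assume "p \<in> {p \<in> {1..n}. w ! (p - 1) < 0}"
  then show "p \<in> FIX n (fst (decode_df w))"
    using decode_perm_outside by (auto simp: FIX_def set_pos_positions)
qed

lemma NFIX_decode: "NFIX n (fst (decode_df w)) = set (pos_positions w)"
  using FIX_decode df_word_letter length_df_word by (force simp: NFIX_def set_pos_positions)

lemma decode_in_arrangements: "decode_df w \<in> arrangements n k"
  unfolding arrangements_def using decode_perm_permutes FIX_decode df_word_letter length_df_word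
  by (auto simp: decode_df_def set_pos_positions)

lemma df_decode: "df n k (decode_df w) = w"
proof (rule nth_equalityI)
  fix i assume "i < length (df n k (decode_df w))"
  then have i: "i < n" by simp
  have a: "(fst (decode_df w), snd (decode_df w)) \<in> arrangements n k"
    using decode_in_arrangements by simp
  show "df n k (decode_df w) ! i = w ! i"
  proof (cases "Suc i \<in> FIX n (fst (decode_df w))")
    case True
    then show ?thesis using df_nth[OF a i] FIX_decode length_df_word by (simp add: decode_df_def)
  next
    case False
    then have "Suc i \<in> NFIX n (fst (decode_df w))" using i by (simp add: NFIX_def)
    then have "Suc i \<in> set (pos_positions w)" using NFIX_decode by simp
    then obtain j where j: "j < length (pos_positions w)" "Suc i = pos_positions w ! j"
      by (auto simp: in_set_conv_nth)
    have "rank (set (pos_positions w)) (fst (decode_df w) (Suc i)) = nat (Pos w ! j)"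
      using rank_sorted_nth[OF sorted_pos_positions] Pos_nth_bounds[OF j(1)] decode_perm_nth[OF j(1)] j(2)
      by simp
    moreover have "Pos w ! j = w ! i"
      using j by (simp add: Pos_eq_map_pos_positions flip: j(2))
    ultimately show ?thesis
      using df_nth[OF a i] False NFIX_decode Pos_nth_bounds[OF j(1)] by simp
  qed
qed (simp add: length_df_word)

lemma decode_in_arrangements_m: "decode_df w \<in> arrangements_m n k m"
  using decode_in_arrangements fix_i_eq_count_df[OF decode_in_arrangements] df_decode w
  by (simp add: arrangements_m_def df_words_def)

end

lemma bij_df: "bij_betw (df n k) (arrangements_m n k m) (df_words n k m)"
proof -
  have "inj_on (df n k) (arrangements_m n k m)"
    using df_inj by (rule inj_on_subset) (auto simp: arrangements_m_def)
  moreover have "df n k ` arrangements_m n k m = df_words n k m"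
  proof
    show "df n k ` arrangements_m n k m \<subseteq> df_words n k m" using df_in_df_words by blast
    show "df_words n k m \<subseteq> df n k ` arrangements_m n k m"
      using df_decode decode_in_arrangements_m by (metis image_eqI subsetI)
  qed
  ultimately show ?thesis unfolding bij_betw_def by simp
qed

lemma bij_betw_conjugate:
  assumes f: "bij_betw f A A'" "bij_betw f B B'" and F: "bij_betw F A' B'"
  defines "\<Psi> \<equiv> the_inv_into B f \<circ> F \<circ> f"
  shows "bij_betw \<Psi> A B" "\<And>x. x \<in> A \<Longrightarrow> f (\<Psi> x) = F (f x)"
proof -
  show "bij_betw \<Psi> A B"
    unfolding \<Psi>_def using bij_betw_trans[OF bij_betw_trans[OF f(1) F] bij_betw_the_inv_into[OF f(2)]]
    by (simp add: comp_assoc)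
  show "f (\<Psi> x) = F (f x)" if "x \<in> A" for x
  proof -
    have "F (f x) \<in> B'" using that bij_betwE[OF f(1)] bij_betwE[OF F] by blast
    then show ?thesis unfolding \<Psi>_def using f_the_inv_into_f_bij_betw[OF f(2)] by simp
  qed
qed

theorem theorem1p2:
  fixes n k :: nat and m :: "nat list" and \<tau> :: "nat \<Rightarrow> nat"
  assumes "n \<ge> 1" and "k \<ge> 1" and "length m = k"
    and "\<tau> permutes {1..k-1}"
  shows "\<exists>\<Psi>. bij_betw \<Psi> (arrangements_m n k m)
              (arrangements_m n k (map (\<lambda>i. m ! (\<tau> i - 1)) [1..<k] @ [m ! (k - 1)])) \<and>
            (\<forall>a \<in> arrangements_m n k m.
               des_arr n k a = dez_arr n k (\<Psi> a) \<and>
               dez_arr n k a = des_arr n k (\<Psi> a) \<and>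
               Der_arr n k a = Der_arr n k (\<Psi> a))"
proof -
  let ?m' = "map (\<lambda>i. m ! (\<tau> i - 1)) [1..<k] @ [m ! (k - 1)]"
  have k: "k > 0" using assms(2) by simp
  obtain F where F: "bij_betw F (df_words n k m) (df_words n k ?m')"
    and stats: "\<And>w. w \<in> df_words n k m \<Longrightarrow>
       des_word (F w) = pf_des k w \<and> pf_des k (F w) = des_word w \<and> Pos (F w) = Pos w"
    using df_words_exchange[OF k assms(3,4)] by blast
  let ?\<Psi> = "the_inv_into (arrangements_m n k ?m') (df n k) \<circ> F \<circ> df n k"
  note \<Psi> = bij_betw_conjugate[OF bij_df bij_df F]
  have "des_arr n k a = dez_arr n k (?\<Psi> a) \<and> dez_arr n k a = des_arr n k (?\<Psi> a) \<and>
      Der_arr n k a = Der_arr n k (?\<Psi> a)" if a: "a \<in> arrangements_m n k m" for a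
  proof -
    have "?\<Psi> a \<in> arrangements_m n k ?m'" using \<Psi>(1) a by (rule bij_betw_apply)
    then show ?thesis
      using a stats[OF bij_betw_apply[OF bij_df a]] \<Psi>(2)[OF a] des_arr_eq_pf_des
      by (simp add: dez_arr_def Der_arr_def arrangements_m_def)
  qed
  then show ?thesis using \<Psi>(1) by blast
qed

end
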